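(* Let $k$ be an algebraically closed field of characteristic $2$, $K = k((s))$, $L = k((t))$ with $t^3 = s$, and let $\sigma$ generate $\mathrm{Gal}(L/K)\cong\mathbb{Z}/3$. Let $a \in t^{-1}k[t^{-1}]$ be nonzero and in standard form, let $M = L[x]/(x^2-x-a)$, and let $N$ be the Galois closure of $M$ over $K$. Then $\mathrm{Gal}(N/K) \cong A_4$ if and only if $a$, viewed as a polynomial in $t^{-1}$, has no nonzero terms of degree divisible by $3$.
   Context: An element $a \in t^{-1}k[t^{-1}]$ is in standard form if, as a polynomial in $t^{-1}$, it has only terms of odd degree. Every $\mathbb{Z}/2$-extension of $k((t))$ is given by $x^2-x=a$ for a unique $a$ in standard form, and its ramification break is the degree of $a$ in $t^{-1}$. *)

theory Defs
  imports "HOL-Computational_Algebra.Computational_Algebra" "HOL-Algebra.Sym_Groups"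
begin

definition alg_closed_type :: "'a::field itself \<Rightarrow> bool" where
  "alg_closed_type _ \<longleftrightarrow> (\<forall>p :: 'a poly. degree p > 0 \<longrightarrow> (\<exists>x. poly p x = 0))"

definition is_subfield :: "'a::field set \<Rightarrow> bool" where
  "is_subfield F \<longleftrightarrow> 0 \<in> F \<and> 1 \<in> F \<and>
     (\<forall>x\<in>F. \<forall>y\<in>F. x + y \<in> F \<and> x * y \<in> F) \<and>
     (\<forall>x\<in>F. - x \<in> F \<and> inverse x \<in> F)"

definition gen_field :: "'a::field set \<Rightarrow> 'a set" where
  "gen_field S = \<Inter>{F. is_subfield F \<and> S \<subseteq> F}"

definition hom_on :: "'a::field set \<Rightarrow> ('a \<Rightarrow> 'b::field) \<Rightarrow> bool" where
  "hom_on S f \<longleftrightarrow> f 1 = 1 \<and> (\<forall>x\<in>S. \<forall>y\<in>S. f (x + y) = f x + f y \<and> f (x * y) = f x * f y)"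

definition embeddings_over :: "'a::field set \<Rightarrow> 'a set \<Rightarrow> ('a \<Rightarrow> 'a) set" where
  "embeddings_over F0 F = {\<tau>. hom_on F \<tau> \<and> (\<forall>x\<in>F0. \<tau> x = x)}"

text \<open>Galois closure of F over F0 inside an algebraically closed ambient field:
  the compositum of all conjugates of F over F0.\<close>
definition galois_closure :: "'a::field set \<Rightarrow> 'a set \<Rightarrow> 'a set" where
  "galois_closure F0 F = gen_field (\<Union>\<tau>\<in>embeddings_over F0 F. \<tau> ` F)"

text \<open>Galois group Gal(N/F0): field automorphisms of N fixing F0 (extended by the
  identity outside N), with composition.\<close>
definition galois_group :: "'a::field set \<Rightarrow> 'a set \<Rightarrow> ('a \<Rightarrow> 'a) monoid" where
  "galois_group F0 N =
     \<lparr> carrier = {\<sigma>. hom_on N \<sigma> \<and> bij_betw \<sigma> N N \<and> (\<forall>x\<in>F0. \<sigma> x = x) \<and> (\<forall>x. x \<notin> N \<longrightarrow> \<sigma> x = x)},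
       mult = (\<lambda>\<sigma> \<tau>. \<sigma> \<circ> \<tau>),
       one = id \<rparr>"

definition standard_form :: "'a::zero fls \<Rightarrow> bool" where
  "standard_form a \<longleftrightarrow> (\<forall>n. fls_nth a n \<noteq> 0 \<longrightarrow> n < 0 \<and> odd n)"

end

theory Submission
  imports Defs
begin

text \<open>
  Write \<open>L = k((t)) \<supseteq> K = k((t\<^sup>3))\<close>. The \<open>K\<close>-embeddings of \<open>L\<close> are the substitutions
  \<open>\<sigma>\<^sub>j : t \<mapsto> \<zeta>\<^sup>j t\<close> with \<open>\<zeta>\<close> a primitive cube root of unity, so the Galois closure of
  \<open>M = L(\<alpha>)\<close> is \<open>N = L(\<alpha>, \<beta>\<^sub>1, \<beta>\<^sub>2)\<close> with \<open>\<beta>\<^sub>j\<^sup>2 - \<beta>\<^sub>j = \<sigma>\<^sub>j a\<close>. A sum of some of the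
  \<open>\<sigma>\<^sub>j a\<close> is again in standard form, and a nonzero element in standard form is never of the form
  \<open>y\<^sup>2 - y\<close> with \<open>y \<in> L\<close>; this decides the degree \<open>[N : L]\<close>.

  If \<open>a\<close> has no terms of degree divisible by 3, then \<open>\<sigma>\<^sub>0 a + \<sigma>\<^sub>1 a + \<sigma>\<^sub>2 a = 0\<close>, so
  \<open>\<beta>\<^sub>2 = \<alpha> + \<beta>\<^sub>1\<close>, \<open>[N : L] = 4\<close> and the Galois group has order 12. It permutes the four
  elements \<open>x y + x\<^sup>2 + y\<^sup>2\<close> (\<open>x \<in> {\<alpha>, \<alpha> + 1}\<close>, \<open>y \<in> {\<beta>\<^sub>1, \<beta>\<^sub>1 + 1}\<close>) faithfully by affine maps of
  \<open>\<bbbF>\<^sub>2\<^sup>2\<close>, which are even permutations; hence it is \<open>A\<^sub>4\<close>. If all terms have degree divisible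
  by 3, then \<open>N = M\<close> and the group has order at most 6; in the remaining case \<open>[N : L] = 8\<close> and
  the group has order at least 24.
\<close>

section \<open>Subfields and homomorphisms on subfields\<close>

lemma subfield_zero: "is_subfield F \<Longrightarrow> 0 \<in> F" by (simp add: is_subfield_def)
lemma subfield_one: "is_subfield F \<Longrightarrow> 1 \<in> F" by (simp add: is_subfield_def)
lemma subfield_add: "is_subfield F \<Longrightarrow> x \<in> F \<Longrightarrow> y \<in> F \<Longrightarrow> x + y \<in> F" by (simp add: is_subfield_def)
lemma subfield_mult: "is_subfield F \<Longrightarrow> x \<in> F \<Longrightarrow> y \<in> F \<Longrightarrow> x * y \<in> F" by (simp add: is_subfield_def)
lemma subfield_uminus: "is_subfield F \<Longrightarrow> x \<in> F \<Longrightarrow> - x \<in> F" by (simp add: is_subfield_def)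
lemma subfield_inverse: "is_subfield F \<Longrightarrow> x \<in> F \<Longrightarrow> inverse x \<in> F" by (simp add: is_subfield_def)

lemma subfield_diff: "is_subfield F \<Longrightarrow> x \<in> F \<Longrightarrow> y \<in> F \<Longrightarrow> x - y \<in> F"
  by (metis diff_conv_add_uminus subfield_add subfield_uminus)

lemma subfield_divide: "is_subfield F \<Longrightarrow> x \<in> F \<Longrightarrow> y \<in> F \<Longrightarrow> x / y \<in> F"
  by (simp add: divide_inverse subfield_inverse subfield_mult)

lemma subfield_power: "is_subfield F \<Longrightarrow> x \<in> F \<Longrightarrow> x ^ n \<in> F"
  by (induction n) (auto simp: subfield_one subfield_mult)

lemma subfield_Inter: "(\<And>F. F \<in> A \<Longrightarrow> is_subfield F) \<Longrightarrow> is_subfield (\<Inter>A)"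
  unfolding is_subfield_def by blast

lemma subfield_UNIV: "is_subfield UNIV"
  by (simp add: is_subfield_def)

lemma gen_field_subfield: "is_subfield (gen_field S)"
  unfolding gen_field_def by (rule subfield_Inter) auto

lemma gen_field_subset: "S \<subseteq> gen_field S"
  unfolding gen_field_def by auto

lemma gen_field_least: "is_subfield F \<Longrightarrow> S \<subseteq> F \<Longrightarrow> gen_field S \<subseteq> F"
  unfolding gen_field_def by auto

lemma gen_field_idem: "is_subfield F \<Longrightarrow> gen_field F = F"
  by (simp add: gen_field_least gen_field_subset subset_antisym)

lemma gen_field_Un_gen_field: "gen_field (A \<union> gen_field B) = gen_field (A \<union> B)"
proof
  have "A \<union> gen_field B \<subseteq> gen_field (A \<union> B)"
    using gen_field_least[OF gen_field_subfield, of B "A \<union> B"] gen_field_subset[of "A \<union> B"] by blast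
  then show "gen_field (A \<union> gen_field B) \<subseteq> gen_field (A \<union> B)"
    by (rule gen_field_least[OF gen_field_subfield])
  have "A \<union> B \<subseteq> gen_field (A \<union> gen_field B)"
    using gen_field_subset[of B] gen_field_subset[of "A \<union> gen_field B"] by blast
  then show "gen_field (A \<union> B) \<subseteq> gen_field (A \<union> gen_field B)"
    by (rule gen_field_least[OF gen_field_subfield])
qed

lemma gen_field_insert_gen_field: "gen_field (insert b (gen_field S)) = gen_field (insert b S)"
  using gen_field_Un_gen_field[of "{b}" S] by simp

locale subfield_hom =
  fixes E :: "'a::field set" and f :: "'a \<Rightarrow> 'b::field"
  assumes subfield: "is_subfield E" and hom: "hom_on E f"
begin

lemma one [simp]: "f 1 = 1"
  using hom by (simp add: hom_on_def)

lemma add: "x \<in> E \<Longrightarrow> y \<in> E \<Longrightarrow> f (x + y) = f x + f y"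
  using hom by (simp add: hom_on_def)

lemma mult: "x \<in> E \<Longrightarrow> y \<in> E \<Longrightarrow> f (x * y) = f x * f y"
  using hom by (simp add: hom_on_def)

lemma zero [simp]: "f 0 = 0"
  using add[OF subfield_zero subfield_zero, OF subfield subfield] by (metis add_0 add_cancel_right_right)

lemma uminus: "x \<in> E \<Longrightarrow> f (- x) = - f x"
  using add[of x "- x"] subfield_uminus[OF subfield] by (simp add: add_eq_0_iff)

lemma diff: "x \<in> E \<Longrightarrow> y \<in> E \<Longrightarrow> f (x - y) = f x - f y"
  using add[of x "- y"] uminus[of y] subfield_uminus[OF subfield] by simp

lemma power: "x \<in> E \<Longrightarrow> f (x ^ n) = f x ^ n"
  by (induction n) (auto simp: mult subfield_power[OF subfield])

lemma mult_inverse: "x \<in> E \<Longrightarrow> x \<noteq> 0 \<Longrightarrow> f x * f (inverse x) = 1"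
  using mult[of x "inverse x"] subfield_inverse[OF subfield] by simp

lemma nonzero: "x \<in> E \<Longrightarrow> x \<noteq> 0 \<Longrightarrow> f x \<noteq> 0"
  using mult_inverse by force

lemma inverse: "x \<in> E \<Longrightarrow> f (inverse x) = inverse (f x)"
  by (cases "x = 0") (auto dest: mult_inverse intro: inverse_unique[symmetric])

lemma inj: "inj_on f E"
  by (rule inj_onI) (metis diff diff_eq_diff_eq diff_self nonzero subfield subfield_diff)

lemma image_subfield: "is_subfield (f ` E)"
  unfolding is_subfield_def
  by (smt (verit, best) add image_iff inverse mult one subfield subfield_add subfield_inverse
      subfield_mult subfield_one subfield_uminus subfield_zero uminus zero)

lemma preimage_subfield: "is_subfield G \<Longrightarrow> is_subfield {x \<in> E. f x \<in> G}"
  unfolding is_subfield_def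
  by (auto simp: add mult uminus inverse intro: subfield_add subfield_mult subfield_uminus subfield_inverse
      subfield_zero subfield_one subfield)

end

lemma subfield_hom_equalizer:
  assumes "subfield_hom E f" "subfield_hom E g"
  shows "is_subfield {x \<in> E. f x = g x}"
proof -
  interpret f: subfield_hom E f by fact
  interpret g: subfield_hom E g by fact
  show ?thesis
    unfolding is_subfield_def
    by (auto simp: f.add g.add f.mult g.mult f.uminus g.uminus f.inverse g.inverse f.subfield
        intro: subfield_add subfield_mult subfield_uminus subfield_inverse subfield_zero subfield_one)
qed

lemma subfield_hom_eq_on_gen_field:
  assumes "subfield_hom (gen_field S) f" "subfield_hom (gen_field S) g" "\<And>x. x \<in> S \<Longrightarrow> f x = g x"
    and "x \<in> gen_field S"
  shows "f x = g x"
proof -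
  have "gen_field S \<subseteq> {x \<in> gen_field S. f x = g x}"
    using assms(3) gen_field_subset by (intro gen_field_least subfield_hom_equalizer assms(1,2)) auto
  then show ?thesis using assms(4) by auto
qed

lemma subfield_hom_image_gen_field:
  assumes "subfield_hom (gen_field S) f"
  shows "f ` gen_field S = gen_field (f ` S)"
proof
  interpret subfield_hom "gen_field S" f by fact
  have "gen_field S \<subseteq> {x \<in> gen_field S. f x \<in> gen_field (f ` S)}"
    using gen_field_subset[of S] gen_field_subset[of "f ` S"]
    by (intro gen_field_least preimage_subfield gen_field_subfield) auto
  then show "f ` gen_field S \<subseteq> gen_field (f ` S)" by auto
  show "gen_field (f ` S) \<subseteq> f ` gen_field S"
    using gen_field_subset[of S] by (intro gen_field_least image_subfield) auto
qed

section \<open>Artin--Schreier extensions in characteristic 2\<close>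

lemma char2_add_self: "(2::'a::field) = 0 \<Longrightarrow> x + x = (0::'a)"
  by (metis mult_2 mult_zero_left)

lemma char2_uminus: "(2::'a::field) = 0 \<Longrightarrow> - x = (x::'a)"
  by (metis add_eq_0_iff2 char2_add_self)

lemma char2_diff: "(2::'a::field) = 0 \<Longrightarrow> x - y = (x::'a) + y"
  by (metis char2_uminus diff_conv_add_uminus)

lemma add_of_bool_inj: "(x::'a::ring_1) + of_bool e = x + of_bool e' \<Longrightarrow> e = e'"
  by (cases e; cases e') simp_all

lemma artin_schreier_roots:
  assumes "(2::'a::field) = 0" and "x^2 - x = y^2 - (y::'a)"
  shows "x = y \<or> x = y + 1"
proof -
  have "(x - y) * (x + y - 1) = (x^2 - x) - (y^2 - y)"
    by (simp add: algebra_simps power2_eq_square)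
  then have "(x - y) * (x + y - 1) = 0" using assms(2) by simp
  then have "x = y \<or> x + y = 1" by auto
  moreover have "x = y + 1" if "x + y = 1"
  proof -
    have "x = 1 - y" using that by (simp add: eq_diff_eq)
    then show ?thesis using char2_diff[OF assms(1)] by simp
  qed
  ultimately show ?thesis by blast
qed

definition pair_form :: "'a::field \<Rightarrow> 'a \<Rightarrow> 'a" where
  "pair_form x y = x * y + x^2 + y^2"

lemma pair_form_rotate:
  fixes x y :: "'a::field"
  assumes "(2::'a) = 0"
  shows "pair_form y (x + y) = pair_form x y" "pair_form (x + y) x = pair_form x y"
  unfolding pair_form_def by (simp_all add: algebra_simps power2_eq_square mult_2_right[symmetric] assms)

lemma pair_form_shift:
  fixes x y s t :: "'a::field"
  assumes "(2::'a) = 0"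
  shows "pair_form (x + s) (y + t) = pair_form x y + (t * x + s * y + (s * t + s^2 + t^2))"
  unfolding pair_form_def by (simp add: algebra_simps power2_eq_square mult_2_right[symmetric] assms)

lemma pair_form_shift_inj:
  fixes x y :: "'a::field"
  assumes char2: "(2::'a) = 0" and F: "is_subfield F" and notin: "x \<notin> F" "y \<notin> F" "x + y \<notin> F"
    and eq: "pair_form (x + of_bool e0) (y + of_bool e1) = pair_form (x + of_bool e0') (y + of_bool e1')"
  shows "e0 = e0' \<and> e1 = e1'"
proof (rule ccontr)
  assume ne: "\<not> (e0 = e0' \<and> e1 = e1')"
  have shift_nonzero: "z + c \<noteq> 0" if "z \<notin> F" "c \<in> F" for z c
    using that F by (metis add_eq_0_iff2 subfield_uminus)
  have bool_in_F: "of_bool e \<in> F" for e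
    using F by (cases e) (simp_all add: subfield_zero subfield_one)
  define s where "s = (of_bool (e0 \<noteq> e0') :: 'a)"
  define t where "t = (of_bool (e1 \<noteq> e1') :: 'a)"
  have "x + of_bool e0 = (x + of_bool e0') + s" "y + of_bool e1 = (y + of_bool e1') + t"
    unfolding s_def t_def by (cases e0; cases e0'; cases e1; cases e1') (simp_all add: ac_simps char2)
  with eq have "t * (x + of_bool e0') + s * (y + of_bool e1') + (s * t + s^2 + t^2) = 0"
    using pair_form_shift[OF char2] by simp
  moreover have "(1::'a) + 1 + 1 = 1" using char2 by simp
  ultimately consider "y + (of_bool e1' + 1) = 0" | "x + (of_bool e0' + 1) = 0"
    | "(x + y) + (of_bool e0' + of_bool e1' + 1) = 0"
    using ne unfolding s_def t_def by (cases "e0 = e0'"; cases "e1 = e1'") (simp_all add: ac_simps)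
  then show False
    using shift_nonzero notin bool_in_F F by cases (blast intro: subfield_add subfield_one)+
qed

definition adjoin :: "'a::field set \<Rightarrow> 'a \<Rightarrow> 'a set" where
  "adjoin F b = {x + y * b | x y. x \<in> F \<and> y \<in> F}"

locale artin_schreier_ext =
  fixes F :: "'a::field set" and b :: 'a and c :: 'a
  assumes char2: "(2::'a) = 0" and subfield: "is_subfield F" and notin: "b \<notin> F"
    and c_in: "c \<in> F" and root: "b^2 = b + c"
begin

lemma coords_unique:
  assumes "x \<in> F" "y \<in> F" "x' \<in> F" "y' \<in> F" "x + y * b = x' + y' * b"
  shows "x = x' \<and> y = y'"
proof (cases "y = y'")
  case False
  have "(y - y') * b = (x + y * b) - x - y' * b" by (simp add: algebra_simps)
  also have "\<dots> = x' - x" using assms(5) by simp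
  finally have "(y - y') * b = x' - x" .
  then have "b = (x' - x) / (y - y')" using False by (simp add: field_simps)
  also have "\<dots> \<in> F" using assms(1-4) subfield by (intro subfield_divide subfield_diff)
  finally show ?thesis using notin by simp
qed (use assms(5) in simp)

lemma mult_in_basis:
  "(x + y * b) * (x' + y' * b) = (x * x' + y * y' * c) + (x * y' + x' * y + y * y') * b"
proof -
  have "(x + y * b) * (x' + y' * b) = x * x' + (x * y' + x' * y) * b + y * y' * b^2"
    by (simp add: algebra_simps power2_eq_square)
  then show ?thesis by (simp add: root algebra_simps)
qed

lemma norm_nonzero:
  assumes "x \<in> F" "y \<in> F" "x + y * b \<noteq> 0"
  shows "x * x + x * y + y * y * c \<noteq> 0"
proof
  assume norm: "x * x + x * y + y * y * c = 0"
  have "(x + y * b) * ((x + y) + y * b) = x * x + x * y + y * y * c"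
    using mult_in_basis[of x y "x + y" y] char2 by (simp add: algebra_simps)
  with norm assms(3) have "y * b + (x + y) = 0" by (simp add: add.commute)
  then have "y * b = - (x + y)" by (rule add_eq_0_iff2[THEN iffD1])
  also have "\<dots> = x + y" by (rule char2_uminus[OF char2])
  finally have "y * b = x + y" .
  moreover have "y \<noteq> 0" using assms(3) \<open>y * b = x + y\<close> by auto
  ultimately have "b = (x + y) / y" by (simp add: field_simps)
  also have "\<dots> \<in> F" using assms(1,2) subfield by (intro subfield_divide subfield_add)
  finally show False using notin by simp
qed

lemma adjoin_subfield: "is_subfield (adjoin F b)"
  unfolding is_subfield_def
proof (intro conjI ballI)
  show "0 \<in> adjoin F b" "1 \<in> adjoin F b"
    unfolding adjoin_def using subfield by (force intro: subfield_zero subfield_one)+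
  fix v w assume "v \<in> adjoin F b" "w \<in> adjoin F b"
  then obtain x y x' y' where xy: "x \<in> F" "y \<in> F" "x' \<in> F" "y' \<in> F"
    and vw: "v = x + y * b" "w = x' + y' * b"
    unfolding adjoin_def by blast
  have "v + w = (x + x') + (y + y') * b" using vw by (simp add: algebra_simps)
  then show "v + w \<in> adjoin F b"
    unfolding adjoin_def using xy subfield by (blast intro: subfield_add)
  show "v * w \<in> adjoin F b"
    unfolding adjoin_def vw mult_in_basis using xy subfield c_in
    by (blast intro: subfield_add subfield_mult)
next
  fix v assume "v \<in> adjoin F b"
  then obtain x y where xy: "x \<in> F" "y \<in> F" and v: "v = x + y * b"
    unfolding adjoin_def by blast
  show "- v \<in> adjoin F b" using \<open>v \<in> adjoin F b\<close> by (simp add: char2_uminus[OF char2])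
  show "inverse v \<in> adjoin F b"
  proof (cases "v = 0")
    case True
    then show ?thesis using \<open>v \<in> adjoin F b\<close> by simp
  next
    case False
    define n where "n = x * x + x * y + y * y * c"
    have "n \<noteq> 0" unfolding n_def using norm_nonzero xy v False by simp
    have "v * ((x + y) + y * b) = n"
      using mult_in_basis[of x y "x + y" y] char2 unfolding v n_def by (simp add: algebra_simps)
    then have "inverse v = ((x + y) + y * b) / n"
      using \<open>n \<noteq> 0\<close> False by (simp add: field_simps)
    then have "inverse v = (x + y) / n + (y / n) * b"
      by (simp add: add_divide_distrib)
    moreover have "(x + y) / n \<in> F" "y / n \<in> F" "n \<in> F"
      unfolding n_def using xy subfield c_in by (auto intro!: subfield_add subfield_divide subfield_mult)
    ultimately show ?thesis unfolding adjoin_def by blast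
  qed
qed

lemma gen_field_insert_eq_adjoin: "gen_field (insert b F) = adjoin F b"
proof
  have "insert b F \<subseteq> adjoin F b"
    unfolding adjoin_def using subfield by (force intro: subfield_zero subfield_one)
  then show "gen_field (insert b F) \<subseteq> adjoin F b"
    by (rule gen_field_least[OF adjoin_subfield])
  show "adjoin F b \<subseteq> gen_field (insert b F)"
    unfolding adjoin_def using gen_field_subset[of "insert b F"]
    by (blast intro: subfield_add subfield_mult gen_field_subfield)
qed

lemma artin_schreier_descent:
  assumes d: "d \<in> F" and w: "w \<in> gen_field (insert b F)" and wd: "w^2 - w = d"
  shows "\<exists>x\<in>F. x^2 - x = d \<or> x^2 - x = d - c"
proof -
  obtain x y where xy: "x \<in> F" "y \<in> F" and w_eq: "w = x + y * b"
    using w unfolding gen_field_insert_eq_adjoin adjoin_def by blast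
  have "w^2 - w = x^2 + y^2 * b^2 + x + y * b"
    unfolding w_eq char2_diff[OF char2] power2_sum using char2 by (simp add: power_mult_distrib)
  then have "d + 0 * b = (x^2 + x + y^2 * c) + (y^2 + y) * b"
    using wd root by (simp add: algebra_simps)
  then have u: "d = x^2 + x + y^2 * c" "0 = y^2 + y"
    using coords_unique[of d 0 "x^2 + x + y^2 * c" "y^2 + y"] d xy subfield c_in
    by (auto intro!: subfield_add subfield_mult subfield_power subfield_zero)
  then have "y * (y + 1) = 0" by (simp add: power2_eq_square algebra_simps)
  then have "y = 0 \<or> y = 1" using char2_uminus[OF char2, of 1] by (auto simp: add_eq_0_iff2)
  then show ?thesis using u xy by (auto simp: char2_diff[OF char2] ac_simps)
qed

definition "coords v = (SOME p. p \<in> F \<times> F \<and> v = fst p + snd p * b)"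

lemma coords_eq: "x \<in> F \<Longrightarrow> y \<in> F \<Longrightarrow> coords (x + y * b) = (x, y)"
proof -
  assume xy: "x \<in> F" "y \<in> F"
  then have "\<exists>p. p \<in> F \<times> F \<and> x + y * b = fst p + snd p * b" by auto
  then have "coords (x + y * b) \<in> F \<times> F \<and>
      x + y * b = fst (coords (x + y * b)) + snd (coords (x + y * b)) * b"
    unfolding coords_def by (rule someI_ex)
  then show ?thesis using coords_unique[of x y] xy by (metis mem_Times_iff prod.collapse)
qed

definition lift :: "('a \<Rightarrow> 'c::field) \<Rightarrow> 'c \<Rightarrow> 'a \<Rightarrow> 'c" where
  "lift \<phi> g v = \<phi> (fst (coords v)) + \<phi> (snd (coords v)) * g"

lemma lift_eq: "x \<in> F \<Longrightarrow> y \<in> F \<Longrightarrow> lift \<phi> g (x + y * b) = \<phi> x + \<phi> y * g"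
  unfolding lift_def by (simp add: coords_eq)

lemma lift_hom_on:
  assumes \<phi>: "subfield_hom F \<phi>" and g: "g^2 = g + \<phi> c"
  shows "hom_on (adjoin F b) (lift \<phi> g)"
  unfolding hom_on_def
proof (intro conjI ballI)
  interpret \<phi>: subfield_hom F \<phi> by fact
  show "lift \<phi> g 1 = 1"
    using lift_eq[of 1 0 \<phi> g] subfield by (simp add: subfield_zero subfield_one)
  fix v w assume "v \<in> adjoin F b" "w \<in> adjoin F b"
  then obtain x y x' y' where xy: "x \<in> F" "y \<in> F" "x' \<in> F" "y' \<in> F"
    and vw: "v = x + y * b" "w = x' + y' * b"
    unfolding adjoin_def by blast
  have "v + w = (x + x') + (y + y') * b" using vw by (simp add: algebra_simps)
  then have "lift \<phi> g (v + w) = \<phi> (x + x') + \<phi> (y + y') * g"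
    using xy subfield by (simp add: lift_eq subfield_add)
  moreover have "lift \<phi> g v + lift \<phi> g w = (\<phi> x + \<phi> y * g) + (\<phi> x' + \<phi> y' * g)"
    using xy vw by (simp add: lift_eq)
  ultimately show "lift \<phi> g (v + w) = lift \<phi> g v + lift \<phi> g w"
    using xy by (simp add: \<phi>.add algebra_simps)
  have "lift \<phi> g (v * w) = \<phi> (x * x' + y * y' * c) + \<phi> (x * y' + x' * y + y * y') * g"
    unfolding vw mult_in_basis using xy subfield c_in by (simp add: lift_eq subfield_add subfield_mult)
  also have "\<dots> = \<phi> x * \<phi> x' + \<phi> y * \<phi> y' * (g * g) + (\<phi> x * \<phi> y' + \<phi> x' * \<phi> y) * g"
    using xy subfield c_in g
    by (simp add: \<phi>.add \<phi>.mult subfield_add subfield_mult power2_eq_square algebra_simps)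
  also have "\<dots> = (\<phi> x + \<phi> y * g) * (\<phi> x' + \<phi> y' * g)"
    by (simp add: algebra_simps)
  also have "\<dots> = lift \<phi> g v * lift \<phi> g w"
    using xy vw by (simp add: lift_eq)
  finally show "lift \<phi> g (v * w) = lift \<phi> g v * lift \<phi> g w" .
qed

lemma extend_hom:
  assumes "subfield_hom F \<phi>" "g^2 = g + \<phi> c"
  shows "\<exists>\<psi>. subfield_hom (gen_field (insert b F)) \<psi> \<and> (\<forall>x\<in>F. \<psi> x = \<phi> x) \<and> \<psi> b = g"
proof (intro exI conjI)
  show "subfield_hom (gen_field (insert b F)) (lift \<phi> g)"
    unfolding gen_field_insert_eq_adjoin subfield_hom_def
    using adjoin_subfield lift_hom_on[OF assms] by simp
  have F01: "0 \<in> F" "1 \<in> F" using subfield by (auto intro: subfield_zero subfield_one)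
  show "\<forall>x\<in>F. lift \<phi> g x = \<phi> x"
  proof
    fix x assume "x \<in> F"
    then show "lift \<phi> g x = \<phi> x"
      using lift_eq[OF \<open>x \<in> F\<close> F01(1), of \<phi> g] subfield_hom.zero[OF assms(1)] by simp
  qed
  show "lift \<phi> g b = g"
    using lift_eq[OF F01, of \<phi> g] subfield_hom.zero[OF assms(1)] subfield_hom.one[OF assms(1)] by simp
qed

end

section \<open>Laurent series\<close>

notation fls_nth (infixl "$$" 75)

text \<open>\<open>fls_scale c f\<close> is the substitution \<open>f(c t)\<close>.\<close>

definition fls_scale :: "'a::field \<Rightarrow> 'a fls \<Rightarrow> 'a fls" where
  "fls_scale c f = Abs_fls (\<lambda>n. c powi n * f $$ n)"

lemma fls_scale_nth [simp]: "fls_scale c f $$ n = c powi n * f $$ n"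
  unfolding fls_scale_def by (rule nth_Abs_fls_lower_bound[where N = "fls_subdegree f"]) simp

lemma fls_scale_subdegree: "c \<noteq> 0 \<Longrightarrow> fls_subdegree (fls_scale c f) = fls_subdegree f"
proof (cases "f = 0")
  case True
  then have "fls_scale c f = 0" by (simp add: fls_eq_iff)
  then show ?thesis using True by simp
qed (auto intro: fls_subdegree_eqI)

lemma fls_scale_add: "fls_scale c (f + g) = fls_scale c f + fls_scale c g"
  by (simp add: fls_eq_iff algebra_simps)

lemma fls_scale_one: "fls_scale c 1 = 1"
  by (simp add: fls_eq_iff)

lemma fls_scale_X: "fls_scale c fls_X = fls_const c * fls_X"
  by (simp add: fls_eq_iff)

lemma fls_scale_1: "fls_scale 1 f = f"
  by (simp add: fls_eq_iff)

lemma fls_scale_scale: "fls_scale c (fls_scale d f) = fls_scale (c * d) f"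
  by (simp add: fls_eq_iff power_int_mult_distrib)

lemma fls_scale_mult:
  assumes c: "c \<noteq> 0"
  shows "fls_scale c (f * g) = fls_scale c f * fls_scale c g"
proof (rule fls_eqI)
  fix n
  have "(fls_scale c f * fls_scale c g) $$ n =
      (\<Sum>i=fls_subdegree f..n - fls_subdegree g. fls_scale c f $$ i * fls_scale c g $$ (n - i))"
    using fls_times_nth(2)[of "fls_scale c f" "fls_scale c g" n] by (simp add: fls_scale_subdegree[OF c])
  also have "\<dots> = (\<Sum>i=fls_subdegree f..n - fls_subdegree g. c powi n * (f $$ i * g $$ (n - i)))"
  proof (rule sum.cong)
    fix i
    have "c powi n = c powi i * c powi (n - i)" using power_int_add[of c i "n - i"] c by simp
    then show "fls_scale c f $$ i * fls_scale c g $$ (n - i) = c powi n * (f $$ i * g $$ (n - i))"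
      by simp
  qed simp
  also have "\<dots> = c powi n * (f * g) $$ n"
    unfolding fls_times_nth(2)[of f g n] by (simp add: sum_distrib_left)
  finally show "fls_scale c (f * g) $$ n = (fls_scale c f * fls_scale c g) $$ n" by simp
qed

lemma fls_scale_power: "c \<noteq> 0 \<Longrightarrow> fls_scale c (f ^ n) = fls_scale c f ^ n"
  by (induction n) (simp_all add: fls_scale_one fls_scale_mult)

lemma fls_compose_power3_nth:
  "fls_compose_power g 3 $$ n = (if 3 dvd n then g $$ (n div 3) else 0)"
  using fls_nth_compose_power[of 3 g n] by simp

lemma fls_scale_compose_power3:
  assumes "c ^ 3 = 1"
  shows "fls_scale c (fls_compose_power g 3) = fls_compose_power g 3"
proof (rule fls_eqI)
  fix n
  have "c powi n = 1" if "3 dvd n"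
    using that assms by (auto simp: power_int_mult)
  then show "fls_scale c (fls_compose_power g 3) $$ n = fls_compose_power g 3 $$ n"
    by (simp add: fls_compose_power3_nth)
qed

lemma fls_X_power3: "(fls_X :: 'a::field fls) ^ 3 = fls_compose_power fls_X 3"
proof (rule fls_eqI)
  fix n :: int
  have "(3 dvd n \<and> n div 3 = 1) \<longleftrightarrow> n = 3" by auto
  then show "(fls_X :: 'a fls) ^ 3 $$ n = fls_compose_power fls_X 3 $$ n"
    unfolding fls_compose_power3_nth fls_X_power_nth fls_X_nth by (auto split: if_splits)
qed

definition fls_residue_part :: "'a::zero fls \<Rightarrow> int \<Rightarrow> 'a fls" where
  "fls_residue_part f r = Abs_fls (\<lambda>m. f $$ (3 * m + r))"

lemma fls_residue_part_nth [simp]: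
  "0 \<le> r \<Longrightarrow> r \<le> 2 \<Longrightarrow> fls_residue_part f r $$ m = f $$ (3 * m + r)"
  unfolding fls_residue_part_def
  by (rule nth_Abs_fls_lower_bound[where N = "min (-1) (fls_subdegree f)"]) auto

lemma fls_decomp_mod3:
  fixes f :: "'a::field fls"
  shows "f = fls_compose_power (fls_residue_part f 0) 3
           + fls_X * fls_compose_power (fls_residue_part f 1) 3
           + fls_X ^ 2 * fls_compose_power (fls_residue_part f 2) 3"
proof (rule fls_eqI)
  fix n :: int
  have X1: "(fls_X * g) $$ k = g $$ (k - 1)" for g :: "'a fls" and k
    by (simp add: fls_X_times_conv_shift)
  have X2: "(fls_X ^ 2 * g) $$ n = g $$ (n - 2)" for g :: "'a fls"
    unfolding power2_eq_square mult.assoc X1 by simp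
  have "n mod 3 = 0 \<or> n mod 3 = 1 \<or> n mod 3 = 2" by auto
  then show "f $$ n = (fls_compose_power (fls_residue_part f 0) 3
           + fls_X * fls_compose_power (fls_residue_part f 1) 3
           + fls_X ^ 2 * fls_compose_power (fls_residue_part f 2) 3) $$ n"
  proof (elim disjE)
    assume "n mod 3 = 0"
    then have "\<not> 3 dvd (n - 1)" "\<not> 3 dvd (n - 2)" "3 dvd n" "3 * (n div 3) + 0 = n" by presburger+
    then show ?thesis by (simp add: X1 X2 fls_compose_power3_nth)
  next
    assume "n mod 3 = 1"
    then have "\<not> 3 dvd (n - 2)" "3 dvd (n - 1)" "\<not> 3 dvd n" "3 * ((n - 1) div 3) + 1 = n" by presburger+
    then show ?thesis by (simp add: X1 X2 fls_compose_power3_nth)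
  next
    assume "n mod 3 = 2"
    then have "3 dvd (n - 2)" "\<not> 3 dvd (n - 1)" "\<not> 3 dvd n" "3 * ((n - 2) div 3) + 2 = n" by presburger+
    then show ?thesis by (simp add: X1 X2 fls_compose_power3_nth)
  qed
qed

text \<open>A nonnegative-valuation \<open>y\<close> gives \<open>y\<^sup>2 - y\<close> without polar part, and a polar \<open>y\<close> of
  valuation \<open>m\<close> gives a nonzero term of the even degree \<open>2 m\<close>.\<close>
lemma standard_form_not_artin_schreier:
  fixes b y :: "'a::field fls"
  assumes sf: "standard_form b" and nz: "b \<noteq> 0"
  shows "y^2 - y \<noteq> b"
proof
  assume eq: "y^2 - y = b"
  define m where "m = fls_subdegree y"
  show False
  proof (cases "y \<noteq> 0 \<and> m < 0")
    case True
    have "(y * y) $$ (m + m) = y $$ m * y $$ m"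
      unfolding m_def by (rule fls_times_base)
    moreover have "y $$ m \<noteq> 0" "y $$ (m + m) = 0" using True unfolding m_def by auto
    ultimately have "b $$ (m + m) \<noteq> 0" using eq[symmetric] by (simp add: power2_eq_square)
    then show False using sf unfolding standard_form_def by auto
  next
    case False
    obtain n where n: "b $$ n \<noteq> 0" using nz fls_eq_iff[of b 0] by auto
    then have "n < 0" using sf unfolding standard_form_def by auto
    have "(y * y) $$ n = 0" "y $$ n = 0"
      using False \<open>n < 0\<close> by (auto simp: m_def intro: fls_times_nth_eq0)
    then have "b $$ n = 0" using eq[symmetric] by (simp add: power2_eq_square)
    then show False using n by simp
  qed
qed

section \<open>Affine maps of \<open>\<bbbF>\<^sub>2\<^sup>2\<close> as even permutations\<close>

text \<open>Points of \<open>\<bbbF>\<^sub>2\<^sup>2\<close> are pairs of booleans (\<open>True\<close> for \<open>1\<close>), numbered \<open>1, \<dots>, 4\<close>.\<close>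

definition point_index :: "bool \<times> bool \<Rightarrow> nat" where
  "point_index p = (if p = (False, False) then 1 else if p = (True, False) then 2
                    else if p = (False, True) then 3 else 4)"

definition index_point :: "nat \<Rightarrow> bool \<times> bool" where
  "index_point n = (if n = 1 then (False, False) else if n = 2 then (True, False)
                    else if n = 3 then (False, True) else (True, True))"

definition perm_of :: "(bool \<times> bool \<Rightarrow> bool \<times> bool) \<Rightarrow> nat \<Rightarrow> nat" where
  "perm_of f n = (if n \<in> {1..4} then point_index (f (index_point n)) else n)"

definition translation :: "bool \<Rightarrow> bool \<Rightarrow> bool \<times> bool \<Rightarrow> bool \<times> bool" where
  "translation e0 e1 p = (fst p \<noteq> e0, snd p \<noteq> e1)"

text \<open>The linear map \<open>(x, y) \<mapsto> (x + y, x)\<close> of order 3 and its powers.\<close>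

definition rotation :: "nat \<Rightarrow> bool \<times> bool \<Rightarrow> bool \<times> bool" where
  "rotation j p = (if j = 0 then p else if j = 1 then (fst p \<noteq> snd p, fst p)
                   else (snd p, fst p \<noteq> snd p))"

definition affine :: "nat \<Rightarrow> bool \<Rightarrow> bool \<Rightarrow> bool \<times> bool \<Rightarrow> bool \<times> bool" where
  "affine j e0 e1 = rotation j \<circ> translation e0 e1"

lemma index_point_index [simp]: "index_point (point_index p) = p"
  unfolding index_point_def point_index_def by (cases p) auto

lemma point_index_range [simp]: "Suc 0 \<le> point_index p" "point_index p \<le> 4"
  unfolding point_index_def by auto

lemma perm_of_comp: "perm_of (f \<circ> g) = perm_of f \<circ> perm_of g"
  unfolding perm_of_def by (auto simp: fun_eq_iff)

lemma perm_of_inj: "perm_of f = perm_of g \<Longrightarrow> f = g"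
  by (metis index_point_index perm_of_def point_index_range atLeastAtMost_iff One_nat_def ext)

lemma perm_of_eqI:
  assumes "\<And>n. n \<in> {1..4} \<Longrightarrow> point_index (f (index_point n)) = \<pi> n"
    and "\<And>n. n \<notin> {1..4} \<Longrightarrow> \<pi> n = n"
  shows "perm_of f = \<pi>"
  using assms unfolding perm_of_def by auto

lemma double_transposition_alt:
  assumes "x \<noteq> y" "u \<noteq> v" "x \<in> {1..4}" "y \<in> {1..4}" "u \<in> {1..4}" "v \<in> {1..4}"
  shows "transpose x y \<circ> transpose u v \<in> carrier (alt_group 4)"
  unfolding alt_group_carrier using assms
  by (simp add: evenperm_comp permutation_swap_id evenperm_swap permutes_compose permutes_swap_id)

lemma id_alt: "id \<in> carrier (alt_group n)"
  by (simp add: alt_group_carrier permutes_id evenperm_id)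

lemma perm_of_translation_alt: "perm_of (translation e0 e1) \<in> carrier (alt_group 4)"
proof -
  have [simp]: "n \<in> {1..4} \<Longrightarrow> n = 1 \<or> n = 2 \<or> n = 3 \<or> n = 4" for n :: nat by auto
  have "perm_of (translation True True) = transpose 1 4 \<circ> transpose 2 3"
    "perm_of (translation True False) = transpose 1 2 \<circ> transpose 3 4"
    "perm_of (translation False True) = transpose 1 3 \<circ> transpose 2 4"
    "perm_of (translation False False) = id"
    by (rule perm_of_eqI; auto simp: index_point_def point_index_def translation_def transpose_def)+
  then show ?thesis
    using id_alt double_transposition_alt by (cases e0; cases e1) auto
qed

lemma perm_of_rotation_alt: "j < 3 \<Longrightarrow> perm_of (rotation j) \<in> carrier (alt_group 4)"
proof -
  have [simp]: "n \<in> {1..4} \<Longrightarrow> n = 1 \<or> n = 2 \<or> n = 3 \<or> n = 4" for n :: nat by auto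
  have "perm_of (rotation 0) = id"
    "perm_of (rotation 1) = transpose 2 3 \<circ> transpose 2 4"
    "perm_of (rotation 2) = transpose 2 4 \<circ> transpose 2 3"
    by (rule perm_of_eqI; auto simp: index_point_def point_index_def rotation_def transpose_def)+
  moreover assume "j < 3"
  then have "j = 0 \<or> j = 1 \<or> j = 2" by auto
  ultimately show ?thesis
    using id_alt double_transposition_alt by auto
qed

lemma perm_of_affine_alt: "j < 3 \<Longrightarrow> perm_of (affine j e0 e1) \<in> carrier (alt_group 4)"
  unfolding affine_def perm_of_comp
  using alt_group_is_group[of 4] perm_of_translation_alt perm_of_rotation_alt
  by (metis alt_group_mult group.subgroup_self subgroup.m_closed)

lemma affine_inj:
  assumes "j < 3" "j' < 3" "affine j e0 e1 = affine j' e0' e1'"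
  shows "j = j' \<and> e0 = e0' \<and> e1 = e1'"
proof -
  have "j = 0 \<or> j = 1 \<or> j = 2" "j' = 0 \<or> j' = 1 \<or> j' = 2" using assms(1,2) by auto
  then show ?thesis
    using fun_cong[OF assms(3), of "(False, False)"] fun_cong[OF assms(3), of "(True, False)"]
    by (auto simp: affine_def rotation_def translation_def)
qed

section \<open>Galois groups\<close>

lemma galois_group_carrier_iff:
  "g \<in> carrier (galois_group F0 N) \<longleftrightarrow>
     hom_on N g \<and> bij_betw g N N \<and> (\<forall>x\<in>F0. g x = x) \<and> (\<forall>x. x \<notin> N \<longrightarrow> g x = x)"
  unfolding galois_group_def by simp

lemma galois_group_mult: "mult (galois_group F0 N) = (\<circ>)"
  unfolding galois_group_def by simp

lemma galois_group_subfield_hom: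
  "is_subfield N \<Longrightarrow> g \<in> carrier (galois_group F0 N) \<Longrightarrow> subfield_hom N g"
  unfolding subfield_hom_def galois_group_carrier_iff by simp

lemma galois_group_comp_closed:
  assumes N: "is_subfield N"
    and g: "g \<in> carrier (galois_group F0 N)" and h: "h \<in> carrier (galois_group F0 N)"
  shows "g \<circ> h \<in> carrier (galois_group F0 N)"
proof -
  interpret g: subfield_hom N g using galois_group_subfield_hom[OF N g] .
  interpret h: subfield_hom N h using galois_group_subfield_hom[OF N h] .
  have bij: "bij_betw g N N" "bij_betw h N N" using g h galois_group_carrier_iff by auto
  then have "h x \<in> N" if "x \<in> N" for x using that by (auto simp: bij_betw_def)
  then have "hom_on N (g \<circ> h)"
    unfolding hom_on_def using N by (simp add: g.add g.mult h.add h.mult subfield_add subfield_mult)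
  then show ?thesis
    using g h bij_betw_trans[OF bij(2,1)] unfolding galois_group_carrier_iff by auto
qed

lemma galois_group_eqI:
  assumes "is_subfield N" "N = gen_field S"
    and g: "g \<in> carrier (galois_group F0 N)" and h: "h \<in> carrier (galois_group F0 N)"
    and "\<And>x. x \<in> S \<Longrightarrow> g x = h x"
  shows "g = h"
proof
  fix x
  show "g x = h x"
  proof (cases "x \<in> N")
    case True
    then show ?thesis
      using subfield_hom_eq_on_gen_field galois_group_subfield_hom[OF assms(1)] assms by metis
  qed (use g h in \<open>simp add: galois_group_carrier_iff\<close>)
qed

lemma galois_group_memI:
  assumes "subfield_hom N \<psi>" "\<psi> ` N = N" "\<forall>x\<in>F0. \<psi> x = x"
  shows "(\<lambda>x. if x \<in> N then \<psi> x else x) \<in> carrier (galois_group F0 N)"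
proof -
  interpret \<psi>: subfield_hom N \<psi> by fact
  have "hom_on N (\<lambda>x. if x \<in> N then \<psi> x else x)"
    unfolding hom_on_def using \<psi>.subfield by (simp add: subfield_one subfield_add subfield_mult \<psi>.add \<psi>.mult)
  moreover have "bij_betw (\<lambda>x. if x \<in> N then \<psi> x else x) N N"
    using \<psi>.inj assms(2) by (simp add: bij_betw_def inj_on_def image_def)
  ultimately show ?thesis
    using assms(3) unfolding galois_group_carrier_iff by auto
qed

lemma subfield_hom_image_eq:
  assumes "subfield_hom (gen_field S) \<psi>" "\<psi> ` S \<subseteq> gen_field S" "S \<subseteq> gen_field (\<psi> ` S)"
  shows "\<psi> ` gen_field S = gen_field S"
  unfolding subfield_hom_image_gen_field[OF assms(1)]
  using assms(2,3) by (meson gen_field_least gen_field_subfield subset_antisym)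

lemma card_le_card_of_witnesses:
  assumes "finite B" "\<And>d. d \<in> D \<Longrightarrow> \<exists>g\<in>B. P d g"
    and "\<And>d d' g. d \<in> D \<Longrightarrow> d' \<in> D \<Longrightarrow> P d g \<Longrightarrow> P d' g \<Longrightarrow> d = d'"
  shows "card D \<le> card B"
proof -
  define w where "w d = (SOME g. g \<in> B \<and> P d g)" for d
  have w: "w d \<in> B \<and> P d (w d)" if "d \<in> D" for d
    unfolding w_def using assms(2)[OF that] by (metis (mono_tags, lifting) someI_ex)
  have "inj_on w D" by (rule inj_onI) (metis w assms(3))
  then show ?thesis using w by (intro card_inj_on_le[OF _ _ assms(1)]) auto
qed

section \<open>The cubic extension \<open>k((t)) / k((t\<^sup>3))\<close> and its conjugations\<close>

locale as_tower =
  fixes a :: "'k::field fls" and \<iota> :: "'k fls \<Rightarrow> 'b::field" and \<alpha> :: 'b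
  assumes k_alg_closed: "alg_closed_type TYPE('k)"
    and k_char: "CHAR('k) = 2"
    and \<Omega>_alg_closed: "alg_closed_type TYPE('b)"
    and \<iota>_hom: "hom_on UNIV \<iota>"
    and a_nz: "a \<noteq> 0"
    and a_std: "standard_form a"
    and \<alpha>_root: "\<alpha>\<^sup>2 - \<alpha> = \<iota> a"
begin

text \<open>In the ambient field, \<open>K \<subseteq> L\<close> are the images of \<open>k((t\<^sup>3)) \<subseteq> k((t))\<close>, \<open>T\<close> is the image of \<open>t\<close>
  and \<open>\<omega>\<close> that of \<open>\<zeta>\<close>; \<open>\<sigma> j\<close> is \<open>t \<mapsto> \<zeta>\<^sup>j t\<close> transported to \<open>L\<close> (junk outside \<open>L\<close>), and
  \<open>a_conj j = \<sigma>\<^sub>j a\<close>.\<close>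

definition "K = \<iota> ` range (\<lambda>f. fls_compose_power f 3)"
definition "L = range \<iota>"
definition "M = gen_field (insert \<alpha> L)"
definition "T = \<iota> fls_X"
definition "\<zeta> = (SOME z::'k. z^2 + z + 1 = 0)"
definition "\<omega> = \<iota> (fls_const \<zeta>)"
definition "\<sigma> j x = \<iota> (fls_scale (\<zeta> ^ j) (inv_into UNIV \<iota> x))"
definition "a_conj j = \<iota> (fls_scale (\<zeta> ^ j) a)"

sublocale \<iota>: subfield_hom UNIV \<iota>
  using \<iota>_hom subfield_UNIV by unfold_locales

lemma \<iota>_inj: "inj \<iota>"
  using \<iota>.inj by simp

lemma \<iota>_add: "\<iota> (f + g) = \<iota> f + \<iota> g" by (simp add: \<iota>.add)
lemma \<iota>_mult: "\<iota> (f * g) = \<iota> f * \<iota> g" by (simp add: \<iota>.mult)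
lemma \<iota>_diff: "\<iota> (f - g) = \<iota> f - \<iota> g" by (simp add: \<iota>.diff)
lemma \<iota>_power: "\<iota> (f ^ n) = \<iota> f ^ n" by (simp add: \<iota>.power)

lemma char2_k: "(2::'k) = 0"
  using of_nat_CHAR[where 'a='k] k_char by simp

lemma char2: "(2::'b) = 0"
proof -
  have "(2 :: 'k fls) = fls_const 2" by (simp add: fls_eq_iff)
  then have "(1::'k fls) + 1 = 0" using char2_k by simp
  then have "\<iota> 0 = \<iota> 1 + \<iota> 1" by (metis \<iota>_add)
  then show ?thesis by simp
qed

lemma zeta_root: "\<zeta>^2 + \<zeta> + 1 = 0"
proof -
  have "degree [:1, 1, 1::'k:] > 0" by simp
  then obtain x where "poly [:1, 1, 1::'k:] x = 0"
    using k_alg_closed unfolding alg_closed_type_def by blast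
  then have "x^2 + x + 1 = 0" by (simp add: algebra_simps power2_eq_square)
  then show ?thesis unfolding \<zeta>_def by (rule someI)
qed

lemma zeta_cube: "\<zeta> ^ 3 = 1"
proof -
  have "\<zeta> ^ 3 - 1 = (\<zeta> - 1) * (\<zeta>^2 + \<zeta> + 1)"
    by (simp add: algebra_simps power2_eq_square power3_eq_cube)
  then show ?thesis using zeta_root by simp
qed

lemma zeta_nonzero: "\<zeta> \<noteq> 0"
  using zeta_cube by auto

lemma zeta_ne_one: "\<zeta> \<noteq> 1"
proof
  assume "\<zeta> = 1"
  then have "(3::'k) = 0" using zeta_root by simp
  then have "(1::'k) = 3 - 2" by simp
  also have "\<dots> = 0" using \<open>(3::'k) = 0\<close> char2_k by simp
  finally show False by simp
qed

lemma zeta_power_nonzero: "\<zeta> ^ j \<noteq> 0"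
  using zeta_nonzero by simp

lemma zeta_power_cube: "(\<zeta> ^ j) ^ 3 = 1"
  using zeta_cube by (simp add: power_mult[symmetric] mult.commute[of j] power_mult)

lemma zeta_power_mod: "\<zeta> ^ j = \<zeta> ^ (j mod 3)"
proof -
  have "\<zeta> ^ j = (\<zeta> ^ 3) ^ (j div 3) * \<zeta> ^ (j mod 3)"
    unfolding power_mult[symmetric] power_add[symmetric] by simp
  then show ?thesis using zeta_cube by simp
qed

lemma \<iota>_const_zeta_power: "\<iota> (fls_const (\<zeta> ^ j)) = \<omega> ^ j"
  unfolding \<omega>_def by (simp add: fls_const_power \<iota>_power)

lemma omega_root: "\<omega>^2 + \<omega> + 1 = 0"
proof -
  have "fls_const (\<zeta>^2 + \<zeta> + 1) = fls_const \<zeta> ^ 2 + fls_const \<zeta> + 1"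
    by (simp add: fls_eq_iff power2_eq_square)
  then have "\<iota> (fls_const \<zeta> ^ 2 + fls_const \<zeta> + 1) = 0" using zeta_root by simp
  then show ?thesis unfolding \<omega>_def by (simp add: \<iota>_add \<iota>_power)
qed

lemma L_subfield: "is_subfield L"
  unfolding L_def using \<iota>.image_subfield by simp

lemma K_subset_L: "K \<subseteq> L"
  unfolding K_def L_def by auto

lemma T_in_L: "T \<in> L"
  unfolding T_def L_def by simp

lemma T_nonzero: "T \<noteq> 0"
  unfolding T_def using \<iota>.nonzero by simp

lemma T_cube_in_K: "T ^ 3 \<in> K"
  unfolding K_def T_def \<iota>_power[symmetric] fls_X_power3 by blast

lemma \<sigma>_\<iota> [simp]: "\<sigma> j (\<iota> f) = \<iota> (fls_scale (\<zeta> ^ j) f)"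
  unfolding \<sigma>_def using \<iota>_inj by simp

lemma \<sigma>_T: "\<sigma> j T = \<omega>^j * T"
  unfolding T_def by (simp add: fls_scale_X \<iota>_mult \<iota>_const_zeta_power)

lemma \<sigma>_in_L: "x \<in> L \<Longrightarrow> \<sigma> j x \<in> L"
  unfolding L_def by auto

lemma \<sigma>_fixes_K: "x \<in> K \<Longrightarrow> \<sigma> j x = x"
  unfolding K_def by (auto simp: fls_scale_compose_power3[OF zeta_power_cube])

lemma \<sigma>_subfield_hom: "subfield_hom L (\<sigma> j)"
  unfolding subfield_hom_def hom_on_def
proof (intro conjI ballI L_subfield)
  show "\<sigma> j 1 = 1" using \<sigma>_\<iota>[of j 1] by (simp add: fls_scale_one)
  fix x y assume "x \<in> L" "y \<in> L"
  then obtain f g where fg: "x = \<iota> f" "y = \<iota> g" unfolding L_def by auto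
  show "\<sigma> j (x + y) = \<sigma> j x + \<sigma> j y"
    unfolding fg \<iota>_add[symmetric] \<sigma>_\<iota> fls_scale_add by (rule refl)
  show "\<sigma> j (x * y) = \<sigma> j x * \<sigma> j y"
    unfolding fg \<iota>_mult[symmetric] \<sigma>_\<iota> fls_scale_mult[OF zeta_power_nonzero] by (rule refl)
qed

lemma \<sigma>_surj: "x \<in> L \<Longrightarrow> \<exists>y\<in>L. \<sigma> j y = x"
proof -
  assume "x \<in> L"
  then obtain f where f: "x = \<iota> f" unfolding L_def by auto
  have "\<zeta> ^ j * \<zeta> ^ (2 * j) = (\<zeta> ^ j) ^ 3" by (simp add: power_add[symmetric] power_mult[symmetric] mult.commute)
  then have "\<sigma> j (\<iota> (fls_scale (\<zeta> ^ (2 * j)) f)) = x"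
    using f zeta_power_cube by (simp add: fls_scale_scale fls_scale_1)
  then show ?thesis unfolding L_def by blast
qed

lemma \<iota>_decomp_mod3:
  "\<iota> f = \<iota> (fls_compose_power (fls_residue_part f 0) 3)
       + T * \<iota> (fls_compose_power (fls_residue_part f 1) 3)
       + T^2 * \<iota> (fls_compose_power (fls_residue_part f 2) 3)"
  unfolding T_def by (subst fls_decomp_mod3) (simp only: \<iota>_add \<iota>_mult \<iota>_power)

lemma \<sigma>_decomp_mod3:
  "\<sigma> j (\<iota> f) = \<iota> (fls_compose_power (fls_residue_part f 0) 3)
       + (\<omega>^j * T) * \<iota> (fls_compose_power (fls_residue_part f 1) 3)
       + (\<omega>^j * T)^2 * \<iota> (fls_compose_power (fls_residue_part f 2) 3)"
proof -
  have "fls_scale (\<zeta>^j) f = fls_compose_power (fls_residue_part f 0) 3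
      + (fls_const (\<zeta>^j) * fls_X) * fls_compose_power (fls_residue_part f 1) 3
      + (fls_const (\<zeta>^j) * fls_X) ^ 2 * fls_compose_power (fls_residue_part f 2) 3"
    by (subst fls_decomp_mod3[of f])
      (simp only: fls_scale_add fls_scale_mult[OF zeta_power_nonzero]
        fls_scale_power[OF zeta_power_nonzero] fls_scale_X fls_scale_compose_power3[OF zeta_power_cube])
  then show ?thesis
    unfolding \<sigma>_\<iota> T_def \<iota>_const_zeta_power[symmetric] by (simp only: \<iota>_add \<iota>_mult \<iota>_power)
qed

lemma cube_roots_of_unity_factor:
  "(x - y) * (x - \<omega> * y) * (x - \<omega>^2 * y) = x^3 - y^3"
proof -
  have "(x - y) * (x - \<omega> * y) * (x - \<omega>^2 * y) =
      x^3 - (\<omega>^2 + \<omega> + 1) * x^2 * y + \<omega> * (\<omega>^2 + \<omega> + 1) * x * y^2 - \<omega>^3 * y^3"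
    by (simp add: algebra_simps power2_eq_square power3_eq_cube)
  moreover have "\<omega>^3 - 1 = (\<omega> - 1) * (\<omega>^2 + \<omega> + 1)"
    by (simp add: algebra_simps power2_eq_square power3_eq_cube)
  ultimately show ?thesis using omega_root by simp
qed

text \<open>An embedding over \<open>K\<close> is determined on \<open>L = K \<oplus> K T \<oplus> K T\<^sup>2\<close> by the image of \<open>T\<close>, which
  is a root of \<open>X\<^sup>3 - T\<^sup>3\<close>.\<close>
lemma embedding_of_L:
  assumes "subfield_hom E \<tau>" "L \<subseteq> E" "\<forall>x\<in>K. \<tau> x = x"
  shows "\<exists>j<3. \<tau> T = \<omega>^j * T \<and> (\<forall>x\<in>L. \<tau> x = \<sigma> j x)"
proof -
  interpret \<tau>: subfield_hom E \<tau> by fact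
  have K_in_E: "x \<in> K \<Longrightarrow> x \<in> E" for x using assms(2) K_subset_L by blast
  have "(\<tau> T)^3 = T^3" using T_in_L T_cube_in_K assms(2,3) by (auto simp: \<tau>.power[symmetric])
  then have "(\<tau> T - T) * (\<tau> T - \<omega> * T) * (\<tau> T - \<omega>^2 * T) = 0"
    using cube_roots_of_unity_factor by simp
  then have "\<tau> T = \<omega>^0 * T \<or> \<tau> T = \<omega>^1 * T \<or> \<tau> T = \<omega>^2 * T" by auto
  moreover have "0 < (3::nat)" "1 < (3::nat)" "2 < (3::nat)" by simp_all
  ultimately obtain j where j: "j < 3" "\<tau> T = \<omega>^j * T" by blast
  have "\<tau> x = \<sigma> j x" if "x \<in> L" for x
  proof -
    obtain f where f: "x = \<iota> f" using \<open>x \<in> L\<close> unfolding L_def by auto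
    have parts: "\<iota> (fls_compose_power (fls_residue_part f r) 3) \<in> K" for r
      unfolding K_def by blast
    have "\<tau> (\<iota> f) = \<iota> (fls_compose_power (fls_residue_part f 0) 3)
       + \<tau> T * \<iota> (fls_compose_power (fls_residue_part f 1) 3)
       + (\<tau> T)^2 * \<iota> (fls_compose_power (fls_residue_part f 2) 3)"
      using parts K_in_E assms(2,3) T_in_L \<tau>.subfield
      by (subst \<iota>_decomp_mod3)
        (simp add: \<tau>.add \<tau>.mult \<tau>.power subfield_add subfield_mult subfield_power subset_iff)
    then show ?thesis unfolding f \<sigma>_decomp_mod3 j(2) .
  qed
  then show ?thesis using j by blast
qed

lemma omega_power_T_inj:
  assumes "i < 3" "j < 3" "\<omega>^i * T = \<omega>^j * T"
  shows "i = j"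
proof -
  have "\<omega> \<noteq> 1" using omega_root char2 by (auto simp: numeral_3_eq_3)
  moreover have "\<omega> \<noteq> 0" using omega_root by auto
  moreover have "\<omega>^2 \<noteq> 1" "\<omega>^2 \<noteq> \<omega>"
    using omega_root char2 \<open>\<omega> \<noteq> 0\<close> \<open>\<omega> \<noteq> 1\<close> by (auto simp: power2_eq_square)
  moreover have "\<omega>^i = \<omega>^j" using assms(3) T_nonzero by simp
  ultimately show ?thesis using assms(1,2) by (auto simp: less_Suc_eq numeral_3_eq_3 numeral_2_eq_2)
qed

end

section \<open>Artin--Schreier extensions of \<open>k((t))\<close> and their conjugates\<close>

context as_tower
begin

lemma not_artin_schreier_in_L:
  assumes "standard_form b" "b \<noteq> 0" "y \<in> L"
  shows "y^2 - y \<noteq> \<iota> b"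
proof
  assume eq: "y^2 - y = \<iota> b"
  obtain f where "y = \<iota> f" using assms(3) unfolding L_def by auto
  with eq have "\<iota> (f^2 - f) = \<iota> b" by (simp add: \<iota>_diff \<iota>_power)
  then have "f^2 - f = b" using \<iota>_inj by (simp add: inj_eq)
  then show False using standard_form_not_artin_schreier[OF assms(1,2)] by blast
qed

lemma alpha_notin_L: "\<alpha> \<notin> L"
  using not_artin_schreier_in_L[OF a_std a_nz] \<alpha>_root by blast

lemma a_conj_in_L: "a_conj j \<in> L"
  unfolding a_conj_def L_def by simp

lemma a_conj_0: "a_conj 0 = \<iota> a"
  unfolding a_conj_def by (simp add: fls_scale_1)

lemma a_conj_mod: "a_conj j = a_conj (j mod 3)"
  unfolding a_conj_def using zeta_power_mod by metis

lemma \<sigma>_a_conj: "\<sigma> j (a_conj i) = a_conj (i + j)"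
  unfolding a_conj_def by (simp add: fls_scale_scale power_add mult.commute)

lemma M_subfield: "is_subfield M"
  unfolding M_def by (rule gen_field_subfield)

lemma L_subset_M: "L \<subseteq> M"
  unfolding M_def using gen_field_subset by blast

lemma alpha_in_M: "\<alpha> \<in> M"
  unfolding M_def using gen_field_subset by blast

lemma M_artin_schreier: "artin_schreier_ext L \<alpha> (\<iota> a)"
  using char2 L_subfield alpha_notin_L \<alpha>_root by unfold_locales (auto simp: L_def algebra_simps)

lemma artin_schreier_root_shift:
  "x^2 - x = c \<Longrightarrow> (x + of_bool e)^2 - (x + of_bool e) = (c::'b)"
  using char2 by (cases e) (auto simp: power2_sum algebra_simps)

lemma extend_conjugation:
  assumes E: "is_subfield E" "L \<subseteq> E" and b: "b \<notin> E" "b^2 - b = a_conj i"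
    and \<psi>: "subfield_hom E \<psi>" "\<forall>x\<in>L. \<psi> x = \<sigma> j x" and g: "g^2 - g = a_conj (i + j)"
  shows "\<exists>\<psi>'. subfield_hom (gen_field (insert b E)) \<psi>' \<and> (\<forall>x\<in>E. \<psi>' x = \<psi> x) \<and> \<psi>' b = g"
proof -
  have "artin_schreier_ext E b (a_conj i)"
    using char2 E b a_conj_in_L by unfold_locales (auto simp: algebra_simps)
  moreover have "g^2 = g + \<psi> (a_conj i)"
    using g \<psi>(2) a_conj_in_L \<sigma>_a_conj by (simp add: algebra_simps)
  ultimately show ?thesis using artin_schreier_ext.extend_hom[OF _ \<psi>(1)] by blast
qed

lemma extend_conjugation_to_M:
  assumes "g^2 - g = a_conj j"
  shows "\<exists>\<psi>. subfield_hom M \<psi> \<and> (\<forall>x\<in>L. \<psi> x = \<sigma> j x) \<and> \<psi> \<alpha> = g"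
  using extend_conjugation[OF L_subfield order_refl alpha_notin_L _ \<sigma>_subfield_hom, where i=0 and g=g and j=j]
    assms \<alpha>_root a_conj_0 unfolding M_def by auto

end

section \<open>Sums of conjugates of \<open>a\<close>\<close>

context as_tower
begin

definition "conj_sum e0 e1 e2 =
  (if e0 then a else 0) + (if e1 then fls_scale \<zeta> a else 0) + (if e2 then fls_scale (\<zeta>^2) a else 0)"

lemma \<iota>_conj_sum:
  "\<iota> (conj_sum e0 e1 e2) =
    (if e0 then a_conj 0 else 0) + (if e1 then a_conj 1 else 0) + (if e2 then a_conj 2 else 0)"
  unfolding conj_sum_def a_conj_def by (simp add: \<iota>_add fls_scale_1)

lemma conj_sum_nth:
  "conj_sum e0 e1 e2 $$ n = (of_bool e0 + of_bool e1 * \<zeta> powi n + of_bool e2 * (\<zeta> powi n)^2) * a $$ n"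
  unfolding conj_sum_def by (simp add: power_int_mult_distrib power2_eq_square algebra_simps)

lemma conj_sum_standard_form: "standard_form (conj_sum e0 e1 e2)"
  using a_std unfolding standard_form_def conj_sum_nth by auto

lemma zeta_powi: "\<zeta> powi n = \<zeta> ^ nat (n mod 3)"
proof -
  have "\<zeta> powi n = \<zeta> powi (3 * (n div 3)) * \<zeta> powi (n mod 3)"
    using zeta_nonzero by (simp add: power_int_add[symmetric])
  also have "\<zeta> powi (3 * (n div 3)) = 1"
    using zeta_cube by (simp add: power_int_mult)
  finally show ?thesis by (simp add: power_int_def)
qed

lemma zeta_square: "\<zeta>^2 = \<zeta> + 1"
proof -
  have "\<zeta>^2 = - \<zeta> - 1" using zeta_root by (simp add: eq_neg_iff_add_eq_0 algebra_simps)
  then show ?thesis using char2_uminus[OF char2_k] char2_diff[OF char2_k] by simp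
qed

lemma zeta_powi_primitive:
  assumes "\<not> 3 dvd n"
  shows "(\<zeta> powi n)^2 = \<zeta> powi n + 1 \<and> \<zeta> powi n \<noteq> 0 \<and> \<zeta> powi n \<noteq> 1"
proof -
  have "n mod 3 = 1 \<or> n mod 3 = 2" using assms by presburger
  then show ?thesis
  proof
    assume "n mod 3 = 1"
    then show ?thesis using zeta_square zeta_nonzero zeta_ne_one by (simp add: zeta_powi)
  next
    assume "n mod 3 = 2"
    then have u: "\<zeta> powi n = \<zeta> + 1" using zeta_square by (simp add: zeta_powi)
    have "(\<zeta> + 1)^2 = \<zeta>^2 + 1" using char2_k by (simp add: power2_sum)
    moreover have "\<zeta> + 1 \<noteq> 1" "\<zeta> + 1 \<noteq> 0" using zeta_nonzero zeta_square zeta_nonzero by auto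
    ultimately show ?thesis using u zeta_square char2_add_self[OF char2_k]
      by (simp add: add.commute add.left_commute)
  qed
qed

lemma cube_root_partial_sum_nonzero:
  fixes u :: 'k
  assumes u: "u^2 = u + 1" "u \<noteq> 0" "u \<noteq> 1" and e: "\<not> (e0 = e1 \<and> e1 = e2)"
  shows "of_bool e0 + of_bool e1 * u + of_bool e2 * u^2 \<noteq> 0"
proof -
  have one: "(1::'k) + 1 = 0" using char2_k by simp
  have u1: "u + 1 \<noteq> 0"
  proof
    assume "u + 1 = 0"
    then have "u = - 1" by (simp add: eq_neg_iff_add_eq_0)
    then show False using u(3) char2_uminus[OF char2_k] by simp
  qed
  have "u + (u + 1) = 1" "1 + (u + 1) = u" using one by (simp_all add: algebra_simps)
  moreover have "1 + u \<noteq> 0" using u1 by (simp add: add.commute)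
  ultimately show ?thesis using e u u1 by (cases e0; cases e1; cases e2) simp_all
qed

lemma conj_sum_nonzero:
  assumes "a $$ n \<noteq> 0" "\<not> 3 dvd n" "\<not> (e0 = e1 \<and> e1 = e2)"
  shows "conj_sum e0 e1 e2 \<noteq> 0"
proof -
  have "conj_sum e0 e1 e2 $$ n \<noteq> 0"
    unfolding conj_sum_nth
    using cube_root_partial_sum_nonzero[OF _ _ _ assms(3)] zeta_powi_primitive[OF assms(2)] assms(1)
    by simp
  then show ?thesis by auto
qed

lemma conj_sum_all_nonzero:
  assumes "a $$ n \<noteq> 0" "3 dvd n"
  shows "conj_sum True True True \<noteq> 0"
proof -
  have "\<zeta> powi n = 1" using assms(2) by (simp add: zeta_powi)
  moreover have "(1::'k) + 1 + 1 = 1" using char2_k by simp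
  ultimately have "conj_sum True True True $$ n \<noteq> 0" using assms(1) by (simp add: conj_sum_nth)
  then show ?thesis by auto
qed

lemma not_artin_schreier_conj_sum:
  "conj_sum e0 e1 e2 \<noteq> 0 \<Longrightarrow> x \<in> L \<Longrightarrow> x^2 - x \<noteq> \<iota> (conj_sum e0 e1 e2)"
  by (rule not_artin_schreier_in_L[OF conj_sum_standard_form])

text \<open>Coefficientwise this is \<open>1 + u = u\<^sup>2\<close> for the primitive cube roots of unity \<open>u = \<zeta>\<^sup>n\<close>
  (\<open>n\<close> not divisible by 3); in characteristic 2 it says \<open>\<sigma>\<^sub>0 a + \<sigma>\<^sub>1 a + \<sigma>\<^sub>2 a = 0\<close>.\<close>
lemma a_conj_sum_eq:
  assumes "\<forall>n. 3 dvd n \<longrightarrow> a $$ n = 0"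
  shows "a_conj 0 + a_conj 1 = a_conj 2"
proof -
  have "conj_sum True True False = conj_sum False False True"
  proof (rule fls_eqI)
    fix n
    show "conj_sum True True False $$ n = conj_sum False False True $$ n"
    proof (cases "3 dvd n")
      case False
      then have "1 + \<zeta> powi n = (\<zeta> powi n)^2"
        using zeta_powi_primitive[of n] by (simp add: add.commute)
      then show ?thesis by (simp add: conj_sum_nth)
    qed (use assms in \<open>simp add: conj_sum_nth\<close>)
  qed
  then have "\<iota> (conj_sum True True False) = \<iota> (conj_sum False False True)" by simp
  then show ?thesis unfolding \<iota>_conj_sum by simp
qed

lemma a_conj_eq_if_supported_on_3:
  assumes "\<forall>n. \<not> 3 dvd n \<longrightarrow> a $$ n = 0"
  shows "a_conj j = a_conj 0"
proof -
  have "fls_scale (\<zeta> ^ j) a = a"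
  proof (rule fls_eqI)
    fix n
    have "(\<zeta> ^ j) powi n = 1" if "3 dvd n"
      using that by (simp add: zeta_powi power_int_power' mult.commute power_int_power)
    then show "fls_scale (\<zeta> ^ j) a $$ n = a $$ n" using assms by auto
  qed
  then show ?thesis unfolding a_conj_def by (simp add: fls_scale_1)
qed

end

section \<open>The Galois closure and its Galois group\<close>

locale as_closure = as_tower +
  fixes b1 b2 :: 'b
  assumes b1_root: "b1^2 - b1 = a_conj 1" and b2_root: "b2^2 - b2 = a_conj 2"
begin

text \<open>\<open>\<beta> i\<close> is the chosen root of \<open>X\<^sup>2 - X - \<sigma>\<^sub>i a\<close>, with indices taken mod 3.\<close>

definition "\<beta> (i::nat) = (if i mod 3 = 0 then \<alpha> else if i mod 3 = 1 then b1 else b2)"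
definition "N = gen_field (L \<union> {\<alpha>, b1, b2})"
definition "G = galois_group K N"
definition "M1 = gen_field (insert b1 M)"

lemma \<beta>_simps [simp]: "\<beta> 0 = \<alpha>" "\<beta> 1 = b1" "\<beta> 2 = b2" "\<beta> (Suc 0) = b1"
  unfolding \<beta>_def by auto

lemma \<beta>_mod: "\<beta> i = \<beta> (i mod 3)"
  unfolding \<beta>_def by simp

lemma \<beta>_cases: "\<beta> i = \<alpha> \<or> \<beta> i = b1 \<or> \<beta> i = b2"
  unfolding \<beta>_def by auto

lemma \<beta>_root: "(\<beta> i)^2 - \<beta> i = a_conj i"
proof -
  have "i mod 3 = 0 \<or> i mod 3 = 1 \<or> i mod 3 = 2" by auto
  then show ?thesis
    using \<alpha>_root b1_root b2_root a_conj_0 a_conj_mod[of i] unfolding \<beta>_def by auto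
qed

lemma N_subfield: "is_subfield N"
  unfolding N_def by (rule gen_field_subfield)

lemma generators_in_N: "L \<union> {\<alpha>, b1, b2} \<subseteq> N"
  unfolding N_def by (rule gen_field_subset)

lemma L_subset_N: "L \<subseteq> N"
  using generators_in_N by blast

lemma \<beta>_in_N: "\<beta> i \<in> N"
  using \<beta>_cases[of i] generators_in_N by auto

lemma of_bool_in_N: "of_bool e \<in> N"
  using N_subfield by (cases e) (simp_all add: subfield_zero subfield_one)

lemma conj_root_in_N:
  assumes "x^2 - x = a_conj i"
  shows "x \<in> N"
proof -
  have "x = \<beta> i \<or> x = \<beta> i + 1"
    using artin_schreier_roots[OF char2] assms \<beta>_root[of i] by simp
  then show ?thesis using \<beta>_in_N N_subfield by (auto intro: subfield_add subfield_one)
qed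

lemma M1_subfield: "is_subfield M1"
  unfolding M1_def by (rule gen_field_subfield)

lemma M_subset_M1: "M \<subseteq> M1"
  unfolding M1_def using gen_field_subset by blast

lemma b1_in_M1: "b1 \<in> M1"
  unfolding M1_def using gen_field_subset by blast

lemma N_eq_insert_M1: "N = gen_field (insert b2 M1)"
proof -
  have "gen_field (insert b2 M1) = gen_field (insert b2 (insert b1 M))"
    unfolding M1_def by (rule gen_field_insert_gen_field)
  also have "\<dots> = gen_field ({b2, b1} \<union> gen_field (insert \<alpha> L))"
    unfolding M_def by simp
  also have "\<dots> = gen_field ({b2, b1} \<union> insert \<alpha> L)"
    by (rule gen_field_Un_gen_field)
  finally show ?thesis unfolding N_def by (simp add: insert_commute)
qed

lemma embedding_of_M_image:
  assumes "\<tau> \<in> embeddings_over K M"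
  shows "\<tau> ` M \<subseteq> N"
proof -
  have \<tau>: "subfield_hom M \<tau>" "\<forall>x\<in>K. \<tau> x = x"
    using assms M_subfield unfolding embeddings_over_def subfield_hom_def by auto
  interpret \<tau>: subfield_hom M \<tau> by (fact \<tau>(1))
  obtain j where j: "\<forall>x\<in>L. \<tau> x = \<sigma> j x"
    using embedding_of_L[OF \<tau>(1) L_subset_M \<tau>(2)] by blast
  have "(\<tau> \<alpha>)^2 - \<tau> \<alpha> = \<tau> (\<alpha>^2 - \<alpha>)"
    using alpha_in_M M_subfield by (simp add: \<tau>.diff \<tau>.power subfield_power)
  also have "\<dots> = a_conj j"
    using \<alpha>_root j a_conj_in_L \<sigma>_a_conj[of j 0] a_conj_0 by (simp add: L_def)
  finally have "\<tau> ` insert \<alpha> L \<subseteq> N"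
    using conj_root_in_N j \<sigma>_in_L L_subset_N by auto
  then show ?thesis
    unfolding M_def subfield_hom_image_gen_field[OF \<tau>(1)[unfolded M_def]]
    by (rule gen_field_least[OF N_subfield])
qed

lemma generators_in_galois_closure: "L \<union> {\<alpha>, b1, b2} \<subseteq> galois_closure K M"
proof -
  have image: "\<psi> ` M \<subseteq> galois_closure K M" if "\<psi> \<in> embeddings_over K M" for \<psi>
    unfolding galois_closure_def using UN_upper[OF that] gen_field_subset by (rule order_trans)
  have conjugate: "b \<in> galois_closure K M" if b: "b^2 - b = a_conj j" for b j
  proof -
    obtain \<psi> where \<psi>: "subfield_hom M \<psi>" "\<forall>x\<in>L. \<psi> x = \<sigma> j x" "\<psi> \<alpha> = b"
      using extend_conjugation_to_M[OF b] by blast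
    have "\<forall>x\<in>K. \<psi> x = x" using \<psi>(2) \<sigma>_fixes_K K_subset_L by (simp add: subset_iff)
    then have "\<psi> \<in> embeddings_over K M"
      using \<psi>(1) unfolding embeddings_over_def subfield_hom_def by simp
    then show ?thesis using image \<psi>(3) alpha_in_M by blast
  qed
  have "id \<in> embeddings_over K M"
    unfolding embeddings_over_def hom_on_def by simp
  then have "M \<subseteq> galois_closure K M" using image[of id] by simp
  moreover have "b1 \<in> galois_closure K M" "b2 \<in> galois_closure K M"
    using conjugate b1_root b2_root by blast+
  ultimately show ?thesis using L_subset_M alpha_in_M by auto
qed

lemma galois_closure_eq_N: "galois_closure K M = N"
proof
  show "galois_closure K M \<subseteq> N"
    unfolding galois_closure_def using embedding_of_M_image
    by (intro gen_field_least[OF N_subfield]) auto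
  show "N \<subseteq> galois_closure K M"
    unfolding N_def galois_closure_def
    using generators_in_galois_closure[unfolded galois_closure_def]
    by (rule gen_field_least[OF gen_field_subfield])
qed

end

context as_closure
begin

lemma G_subfield_hom: "g \<in> carrier G \<Longrightarrow> subfield_hom N g"
  unfolding G_def by (rule galois_group_subfield_hom[OF N_subfield])

lemma G_fixes_K: "g \<in> carrier G \<Longrightarrow> \<forall>x\<in>K. g x = x"
  unfolding G_def galois_group_carrier_iff by simp

lemma galois_group_action:
  assumes g: "g \<in> carrier G"
  shows "\<exists>j<3. g T = \<omega>^j * T \<and> (\<forall>x\<in>L. g x = \<sigma> j x) \<and>
    (\<forall>i. g (\<beta> i) = \<beta> (i + j) \<or> g (\<beta> i) = \<beta> (i + j) + 1)"
proof -
  interpret g: subfield_hom N g using G_subfield_hom[OF g] .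
  obtain j where j: "j < 3" "g T = \<omega>^j * T" "\<forall>x\<in>L. g x = \<sigma> j x"
    using embedding_of_L[OF G_subfield_hom[OF g] L_subset_N G_fixes_K[OF g]] by blast
  have "g (\<beta> i) = \<beta> (i + j) \<or> g (\<beta> i) = \<beta> (i + j) + 1" for i
  proof -
    have "(g (\<beta> i))^2 - g (\<beta> i) = g ((\<beta> i)^2 - \<beta> i)"
      using \<beta>_in_N N_subfield by (simp add: g.diff g.power subfield_power)
    also have "\<dots> = (\<beta> (i + j))^2 - \<beta> (i + j)"
      using \<beta>_root j(3) a_conj_in_L \<sigma>_a_conj by simp
    finally show ?thesis by (rule artin_schreier_roots[OF char2])
  qed
  then show ?thesis using j by blast
qed

lemma G_eqI:
  assumes g: "g \<in> carrier G" and h: "h \<in> carrier G"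
    and "g T = h T" "g \<alpha> = h \<alpha>" "g b1 = h b1" "g b2 = h b2"
  shows "g = h"
proof -
  obtain i where i: "i < 3" "g T = \<omega>^i * T" "\<forall>x\<in>L. g x = \<sigma> i x"
    using galois_group_action[OF g] by blast
  obtain j where j: "j < 3" "h T = \<omega>^j * T" "\<forall>x\<in>L. h x = \<sigma> j x"
    using galois_group_action[OF h] by blast
  have "\<omega>^i * T = \<omega>^j * T" using i(2) j(2) assms(3) by metis
  then have "i = j" by (rule omega_power_T_inj[OF i(1) j(1)])
  then have "g x = h x" if "x \<in> L \<union> {\<alpha>, b1, b2}" for x
    using that i(3) j(3) assms(4-6) by auto
  then show ?thesis
    using galois_group_eqI[OF N_subfield N_def g[unfolded G_def] h[unfolded G_def]] by blast
qed

lemma conjugation_image_eq_N: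
  assumes \<psi>: "subfield_hom N \<psi>" "\<forall>x\<in>L. \<psi> x = \<sigma> j x"
    and \<beta>: "\<forall>i. \<psi> (\<beta> i) = \<beta> (i + j) \<or> \<psi> (\<beta> i) = \<beta> (i + j) + 1"
  shows "\<psi> ` N = N"
proof -
  let ?S = "L \<union> {\<alpha>, b1, b2}"
  have "{\<alpha>, b1, b2} \<subseteq> range \<beta>" using rangeI[of \<beta> 0] rangeI[of \<beta> 1] rangeI[of \<beta> 2] by simp
  moreover have "range \<beta> \<subseteq> {\<alpha>, b1, b2}" using \<beta>_cases by blast
  ultimately have gens: "?S = L \<union> range \<beta>" by blast
  have "\<psi> (\<beta> i) \<in> N" for i
    using \<beta>[rule_format, of i] \<beta>_in_N by (auto intro!: subfield_add[OF N_subfield] subfield_one[OF N_subfield])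
  then have "\<psi> ` ?S \<subseteq> N"
    unfolding gens using \<psi>(2) \<sigma>_in_L L_subset_N by auto
  moreover have "?S \<subseteq> gen_field (\<psi> ` ?S)"
  proof -
    let ?H = "gen_field (\<psi> ` ?S)"
    have H: "is_subfield ?H" "\<psi> ` ?S \<subseteq> ?H" by (rule gen_field_subfield, rule gen_field_subset)
    have "L \<subseteq> ?H"
    proof
      fix x assume "x \<in> L"
      then obtain y where "y \<in> L" "\<psi> y = x" using \<sigma>_surj \<psi>(2) by metis
      then show "x \<in> ?H" using H(2) by blast
    qed
    moreover have "\<beta> k \<in> ?H" for k
    proof -
      have "(k + 2 * j + j) mod 3 = k mod 3" by presburger
      then have "\<beta> (k + 2 * j + j) = \<beta> k" using \<beta>_mod by metis
      then have "\<beta> k = \<psi> (\<beta> (k + 2 * j)) \<or> \<beta> k = \<psi> (\<beta> (k + 2 * j)) - 1"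
        using \<beta>[rule_format, of "k + 2 * j"] by auto
      moreover have image: "\<psi> (\<beta> (k + 2 * j)) \<in> ?H" using H(2) gens by blast
      moreover have "\<psi> (\<beta> (k + 2 * j)) - 1 \<in> ?H"
        using subfield_diff[OF H(1) image subfield_one[OF H(1)]] .
      ultimately show ?thesis by auto
    qed
    ultimately show ?thesis unfolding gens by blast
  qed
  ultimately show ?thesis
    using subfield_hom_image_eq[of ?S \<psi>] \<psi>(1) unfolding N_def by blast
qed

lemma galois_group_elem_of_conjugation:
  assumes \<psi>: "subfield_hom N \<psi>" "\<forall>x\<in>L. \<psi> x = \<sigma> j x"
    and images: "\<psi> \<alpha> = \<beta> j + of_bool e0" "\<psi> b1 = \<beta> (1 + j) + of_bool e1" "\<psi> b2 = \<beta> (2 + j) + of_bool e2"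
  shows "\<exists>g\<in>carrier G. g T = \<omega>^j * T \<and> g \<alpha> = \<beta> j + of_bool e0 \<and> g b1 = \<beta> (1 + j) + of_bool e1
      \<and> g b2 = \<beta> (2 + j) + of_bool e2"
proof -
  have "\<psi> (\<beta> i) = \<beta> (i + j) \<or> \<psi> (\<beta> i) = \<beta> (i + j) + 1" for i
  proof -
    have "\<beta> i = \<beta> (i mod 3)" "\<beta> (i + j) = \<beta> (i mod 3 + j)"
      using \<beta>_mod[of i] \<beta>_mod[of "i + j"] \<beta>_mod[of "i mod 3 + j"] by (simp_all add: mod_add_left_eq)
    moreover have "i mod 3 = 0 \<or> i mod 3 = 1 \<or> i mod 3 = 2" by auto
    ultimately show ?thesis using images by (cases e0; cases e1; cases e2) (auto simp: add.commute)
  qed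
  then have "\<psi> ` N = N" using conjugation_image_eq_N[OF \<psi>] by blast
  moreover have "\<forall>x\<in>K. \<psi> x = x" using \<psi>(2) \<sigma>_fixes_K K_subset_L by (simp add: subset_iff)
  ultimately have "(\<lambda>x. if x \<in> N then \<psi> x else x) \<in> carrier G"
    unfolding G_def by (rule galois_group_memI[OF \<psi>(1)])
  moreover have "T \<in> N" "\<alpha> \<in> N" "b1 \<in> N" "b2 \<in> N" using T_in_L generators_in_N by auto
  ultimately show ?thesis using \<psi>(2) T_in_L \<sigma>_T images by (intro bexI) simp_all
qed

end

context as_closure
begin

lemma b1_notin_M:
  assumes "a $$ n \<noteq> 0" "\<not> 3 dvd n"
  shows "b1 \<notin> M"
proof
  assume "b1 \<in> M"
  then obtain x where x: "x \<in> L" "x^2 - x = a_conj 1 \<or> x^2 - x = a_conj 1 - \<iota> a"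
    using artin_schreier_ext.artin_schreier_descent[OF M_artin_schreier a_conj_in_L _ b1_root]
    unfolding M_def by blast
  have "\<iota> (conj_sum False True False) = a_conj 1" "\<iota> (conj_sum True True False) = a_conj 1 - \<iota> a"
    unfolding \<iota>_conj_sum char2_diff[OF char2] a_conj_0 by (simp_all add: ac_simps)
  then show False
    using x not_artin_schreier_conj_sum[OF conj_sum_nonzero[OF assms], of False True False]
      not_artin_schreier_conj_sum[OF conj_sum_nonzero[OF assms], of True True False] by auto
qed

lemma b2_notin_M1:
  assumes "a $$ n \<noteq> 0" "\<not> 3 dvd n" and "a $$ m \<noteq> 0" "3 dvd m"
  shows "b2 \<notin> M1"
proof
  assume "b2 \<in> M1"
  interpret M1: artin_schreier_ext M b1 "a_conj 1"
    using char2 M_subfield b1_notin_M[OF assms(1,2)] a_conj_in_L L_subset_M b1_root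
    by unfold_locales (auto simp: algebra_simps)
  interpret M: artin_schreier_ext L \<alpha> "\<iota> a" by (rule M_artin_schreier)
  obtain x where x: "x \<in> M" "x^2 - x = a_conj 2 \<or> x^2 - x = a_conj 2 - a_conj 1"
    using M1.artin_schreier_descent[OF _ \<open>b2 \<in> M1\<close>[unfolded M1_def] b2_root] a_conj_in_L L_subset_M
    by blast
  have "a_conj 2 - a_conj 1 \<in> L" using a_conj_in_L L_subfield by (blast intro: subfield_diff)
  then obtain y where y: "y \<in> L" "y^2 - y = a_conj 2 \<or> y^2 - y = a_conj 2 - \<iota> a
      \<or> y^2 - y = a_conj 2 - a_conj 1 \<or> y^2 - y = a_conj 2 - a_conj 1 - \<iota> a"
    using x M.artin_schreier_descent[OF a_conj_in_L, of x 2] M.artin_schreier_descent[of _ x]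
    unfolding M_def by blast
  have "\<iota> (conj_sum False False True) = a_conj 2" "\<iota> (conj_sum True False True) = a_conj 2 - \<iota> a"
    "\<iota> (conj_sum False True True) = a_conj 2 - a_conj 1"
    "\<iota> (conj_sum True True True) = a_conj 2 - a_conj 1 - \<iota> a"
    unfolding \<iota>_conj_sum char2_diff[OF char2] a_conj_0 by (simp_all add: ac_simps)
  then show False
    using y not_artin_schreier_conj_sum[OF conj_sum_nonzero[OF assms(1,2)], of False False True]
      not_artin_schreier_conj_sum[OF conj_sum_nonzero[OF assms(1,2)], of True False True]
      not_artin_schreier_conj_sum[OF conj_sum_nonzero[OF assms(1,2)], of False True True]
      not_artin_schreier_conj_sum[OF conj_sum_all_nonzero[OF assms(3,4)]] by auto
qed

lemma extend_conjugation_to_M1: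
  assumes "a $$ n \<noteq> 0" "\<not> 3 dvd n"
  shows "\<exists>\<psi>. subfield_hom M1 \<psi> \<and> (\<forall>x\<in>L. \<psi> x = \<sigma> j x) \<and> \<psi> \<alpha> = \<beta> j + of_bool e0
     \<and> \<psi> b1 = \<beta> (1 + j) + of_bool e1"
proof -
  obtain \<psi> where \<psi>: "subfield_hom M \<psi>" "\<forall>x\<in>L. \<psi> x = \<sigma> j x" "\<psi> \<alpha> = \<beta> j + of_bool e0"
    using extend_conjugation_to_M[OF artin_schreier_root_shift[OF \<beta>_root]] by blast
  obtain \<psi>' where "subfield_hom M1 \<psi>'" "\<forall>x\<in>M. \<psi>' x = \<psi> x" "\<psi>' b1 = \<beta> (1 + j) + of_bool e1"
    using extend_conjugation[OF M_subfield L_subset_M b1_notin_M[OF assms] b1_root \<psi>(1,2)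
        artin_schreier_root_shift[OF \<beta>_root]]
    unfolding M1_def by blast
  then show ?thesis using \<psi> L_subset_M alpha_in_M by (intro exI[of _ \<psi>']) auto
qed

lemma extend_conjugation_to_N:
  assumes "a $$ n \<noteq> 0" "\<not> 3 dvd n" and "a $$ m \<noteq> 0" "3 dvd m"
  shows "\<exists>\<psi>. subfield_hom N \<psi> \<and> (\<forall>x\<in>L. \<psi> x = \<sigma> j x) \<and> \<psi> \<alpha> = \<beta> j + of_bool e0
     \<and> \<psi> b1 = \<beta> (1 + j) + of_bool e1 \<and> \<psi> b2 = \<beta> (2 + j) + of_bool e2"
proof -
  obtain \<psi> where \<psi>: "subfield_hom M1 \<psi>" "\<forall>x\<in>L. \<psi> x = \<sigma> j x" "\<psi> \<alpha> = \<beta> j + of_bool e0"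
      "\<psi> b1 = \<beta> (1 + j) + of_bool e1"
    using extend_conjugation_to_M1[OF assms(1,2)] by blast
  have L_M1: "L \<subseteq> M1" using L_subset_M M_subset_M1 by blast
  obtain \<psi>' where "subfield_hom N \<psi>'" "\<forall>x\<in>M1. \<psi>' x = \<psi> x" "\<psi>' b2 = \<beta> (2 + j) + of_bool e2"
    using extend_conjugation[OF M1_subfield L_M1 b2_notin_M1[OF assms] b2_root \<psi>(1,2)
        artin_schreier_root_shift[OF \<beta>_root]]
    unfolding N_eq_insert_M1 by blast
  then show ?thesis
    using \<psi> L_M1 alpha_in_M M_subset_M1 b1_in_M1 by (intro exI[of _ \<psi>']) auto
qed

lemma card_G_ge_24:
  assumes "a $$ n \<noteq> 0" "\<not> 3 dvd n" and "a $$ m \<noteq> 0" "3 dvd m" and "finite (carrier G)"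
  shows "24 \<le> card (carrier G)"
proof -
  let ?D = "{..<3::nat} \<times> (UNIV :: bool set) \<times> (UNIV :: bool set) \<times> (UNIV :: bool set)"
  let ?P = "\<lambda>(j, e0, e1, e2) g. g T = \<omega>^j * T \<and> g \<alpha> = \<beta> j + of_bool e0
      \<and> g b1 = \<beta> (1 + j) + of_bool e1 \<and> g b2 = \<beta> (2 + j) + of_bool e2"
  have "card ?D \<le> card (carrier G)"
  proof (rule card_le_card_of_witnesses[OF assms(5)])
    fix d assume "d \<in> ?D"
    then obtain j e0 e1 e2 where "d = (j, e0, e1, e2)" "j < 3" by auto
    then show "\<exists>g\<in>carrier G. ?P d g"
      using extend_conjugation_to_N[OF assms(1-4), of j e0 e1 e2] galois_group_elem_of_conjugation
      by fastforce
  next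
    fix d d' g assume "d \<in> ?D" "d' \<in> ?D" "?P d g" "?P d' g"
    then obtain j e0 e1 e2 j' e0' e1' e2' where d: "d = (j, e0, e1, e2)" "d' = (j', e0', e1', e2')"
      and "j < 3" "j' < 3" by auto
    with \<open>?P d g\<close> \<open>?P d' g\<close> have "j = j'" using omega_power_T_inj by auto
    with \<open>?P d g\<close> \<open>?P d' g\<close> show "d = d'" unfolding d by (auto dest: add_of_bool_inj)
  qed
  then show ?thesis by (simp add: card_cartesian_product del: UNIV_Times_UNIV)
qed

end

lemma (in as_closure) card_G_le_6:
  assumes "b1 = \<alpha>" "b2 = \<alpha>"
  shows "card (carrier G) \<le> 6"
proof -
  define f where "f g = (g T, g \<alpha>)" for g :: "'b \<Rightarrow> 'b"
  let ?V = "((\<lambda>j. \<omega>^j * T) ` {..<3}) \<times> {\<alpha>, \<alpha> + 1}"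
  have "inj_on f (carrier G)"
    by (rule inj_onI) (use assms G_eqI in \<open>auto simp: f_def\<close>)
  moreover have "f ` carrier G \<subseteq> ?V"
  proof
    fix p assume "p \<in> f ` carrier G"
    then obtain g where g: "g \<in> carrier G" "p = f g" by blast
    then obtain j where j: "j < 3" "g T = \<omega>^j * T" "\<forall>i. g (\<beta> i) = \<beta> (i + j) \<or> g (\<beta> i) = \<beta> (i + j) + 1"
      using galois_group_action by blast
    have "\<beta> j = \<alpha>" using \<beta>_cases[of j] assms by auto
    then have "g \<alpha> \<in> {\<alpha>, \<alpha> + 1}" using j(3)[rule_format, of 0] by auto
    then show "p \<in> ?V" unfolding g(2) f_def using j(1,2) by auto
  qed
  ultimately have "card (carrier G) \<le> card ?V"
    by (intro card_inj_on_le) auto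
  also have "\<dots> \<le> 3 * 2"
    unfolding card_cartesian_product
    by (intro mult_le_mono) (auto intro: order_trans[OF card_image_le] simp: card_insert_if)
  finally show ?thesis by simp
qed

section \<open>The case \<open>\<sigma>\<^sub>0 a + \<sigma>\<^sub>1 a + \<sigma>\<^sub>2 a = 0\<close>: the group \<open>A\<^sub>4\<close>\<close>

locale as_closure_A4 = as_closure +
  fixes n\<^sub>0 :: int
  assumes b2_eq: "b2 = \<alpha> + b1"
    and n\<^sub>0_coeff: "a $$ n\<^sub>0 \<noteq> 0" "\<not> 3 dvd n\<^sub>0"
begin

lemma N_eq_M1: "N = M1"
proof -
  have "b2 \<in> M1"
    unfolding b2_eq using alpha_in_M M_subset_M1 b1_in_M1 M1_subfield by (blast intro: subfield_add)
  then show ?thesis unfolding N_eq_insert_M1 using gen_field_idem[OF M1_subfield] by (simp add: insert_absorb)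
qed

lemma \<beta>_eq: "\<beta> i = (if i mod 3 = 0 then \<alpha> else if i mod 3 = 1 then b1 else \<alpha> + b1)"
  unfolding \<beta>_def using b2_eq by simp

lemma \<beta>_sum: "\<beta> j + \<beta> (1 + j) = \<beta> (2 + j)"
proof -
  have \<alpha>\<alpha>: "\<alpha> + \<alpha> = 0" and b1b1: "b1 + b1 = 0" using char2_add_self[OF char2] by auto
  consider "j mod 3 = 0" | "j mod 3 = 1" | "j mod 3 = 2" by linarith
  then show ?thesis
  proof cases
    case 1
    then have "(1 + j) mod 3 = 1" "(2 + j) mod 3 = 2" by presburger+
    then have "\<beta> j = \<alpha>" "\<beta> (1 + j) = b1" "\<beta> (2 + j) = b2" using 1 by (simp_all add: \<beta>_def)
    then show ?thesis using b2_eq by simp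
  next
    case 2
    then have "(1 + j) mod 3 = 2" "(2 + j) mod 3 = 0" by presburger+
    then have "\<beta> j = b1" "\<beta> (1 + j) = b2" "\<beta> (2 + j) = \<alpha>" using 2 by (simp_all add: \<beta>_def)
    then show ?thesis using b2_eq b1b1 by (simp add: add.left_commute)
  next
    case 3
    then have "(1 + j) mod 3 = 0" "(2 + j) mod 3 = 1" by presburger+
    then have "\<beta> j = b2" "\<beta> (1 + j) = \<alpha>" "\<beta> (2 + j) = b1" using 3 by (simp_all add: \<beta>_def)
    then show ?thesis using b2_eq \<alpha>\<alpha> by (simp add: add.commute add.left_commute)
  qed
qed

lemma galois_group_elem_exists:
  assumes "j < 3"
  shows "\<exists>g\<in>carrier G. g T = \<omega>^j * T \<and> g \<alpha> = \<beta> j + of_bool e0 \<and> g b1 = \<beta> (1 + j) + of_bool e1"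
proof -
  obtain \<psi> where \<psi>: "subfield_hom M1 \<psi>" "\<forall>x\<in>L. \<psi> x = \<sigma> j x" "\<psi> \<alpha> = \<beta> j + of_bool e0"
      "\<psi> b1 = \<beta> (1 + j) + of_bool e1"
    using extend_conjugation_to_M1[OF n\<^sub>0_coeff] by blast
  interpret \<psi>: subfield_hom M1 \<psi> by (fact \<psi>(1))
  have "\<psi> b2 = \<psi> \<alpha> + \<psi> b1"
    using b2_eq alpha_in_M M_subset_M1 b1_in_M1 by (simp add: \<psi>.add subset_iff)
  also have "\<dots> = (\<beta> j + \<beta> (1 + j)) + (of_bool e0 + of_bool e1)"
    using \<psi>(3,4) by (simp add: ac_simps)
  also have "\<dots> = \<beta> (2 + j) + of_bool (e0 \<noteq> e1)"
    unfolding \<beta>_sum using char2 by (cases e0; cases e1) simp_all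
  finally show ?thesis
    using galois_group_elem_of_conjugation[OF \<psi>(1)[folded N_eq_M1] \<psi>(2-4)] by blast
qed

lemma galois_group_params:
  assumes "g \<in> carrier G"
  shows "\<exists>j e0 e1. j < 3 \<and> g T = \<omega>^j * T \<and> g \<alpha> = \<beta> j + of_bool e0 \<and> g b1 = \<beta> (1 + j) + of_bool e1"
proof -
  obtain j where j: "j < 3" "g T = \<omega>^j * T" "\<forall>i. g (\<beta> i) = \<beta> (i + j) \<or> g (\<beta> i) = \<beta> (i + j) + 1"
    using galois_group_action[OF assms] by blast
  have "\<exists>e0. g \<alpha> = \<beta> j + of_bool e0"
    using j(3)[rule_format, of 0] by (metis \<beta>_simps(1) add_0 add.right_neutral of_bool_eq(1,2))
  moreover have "\<exists>e1. g b1 = \<beta> (1 + j) + of_bool e1"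
    using j(3)[rule_format, of 1] by (metis \<beta>_simps(2) add.commute add.right_neutral of_bool_eq(1,2))
  ultimately show ?thesis using j by blast
qed

text \<open>\<open>pair_form\<close> is invariant under the cyclic permutation \<open>x \<mapsto> y \<mapsto> x + y \<mapsto> x\<close>, which
  is how the Galois group permutes \<open>\<alpha>, \<beta>\<^sub>1, \<beta>\<^sub>2\<close> up to translations; so it permutes the four
  elements \<open>\<theta> p\<close> by affine maps of \<open>\<bbbF>\<^sub>2\<^sup>2\<close>.\<close>

definition "\<theta> p = pair_form (\<alpha> + of_bool (fst p)) (b1 + of_bool (snd p))"

lemma \<theta>_inj: "\<theta> p = \<theta> q \<Longrightarrow> p = q"
proof -
  have "b1 \<notin> L" using b1_notin_M[OF n\<^sub>0_coeff] L_subset_M by blast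
  moreover have "\<alpha> + b1 \<notin> L"
  proof
    assume "\<alpha> + b1 \<in> L"
    then have "(\<alpha> + b1) + \<alpha> \<in> M"
      using L_subset_M alpha_in_M M_subfield by (blast intro: subfield_add)
    then show False using b1_notin_M[OF n\<^sub>0_coeff] by (simp add: char2)
  qed
  moreover assume "\<theta> p = \<theta> q"
  ultimately show "p = q"
    using pair_form_shift_inj[OF char2 L_subfield alpha_notin_L] unfolding \<theta>_def by (auto simp: prod_eq_iff)
qed

lemma pair_form_\<beta>:
  assumes "j < 3"
  shows "pair_form (\<beta> j + of_bool P) (\<beta> (1 + j) + of_bool Q) = \<theta> (rotation j (P, Q))"
proof -
  have shift: "of_bool P + of_bool Q = (of_bool (P \<noteq> Q) :: 'b)" using char2 by (cases P; cases Q) simp_all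
  have "j = 0 \<or> j = 1 \<or> j = 2" using assms by auto
  then show ?thesis
  proof (elim disjE)
    assume "j = 1"
    then have "\<beta> j = b1" "\<beta> (1 + j) = \<alpha> + b1" unfolding \<beta>_eq by simp_all
    then have "pair_form (\<beta> j + of_bool P) (\<beta> (1 + j) + of_bool Q)
        = pair_form (b1 + of_bool P) ((\<alpha> + of_bool (P \<noteq> Q)) + (b1 + of_bool P))"
      unfolding shift[symmetric] by (simp add: ac_simps char2)
    then show ?thesis using \<open>j = 1\<close> pair_form_rotate(1)[OF char2] by (simp add: \<theta>_def rotation_def)
  next
    assume "j = 2"
    then have "\<beta> j = \<alpha> + b1" "\<beta> (1 + j) = \<alpha>" unfolding \<beta>_eq by simp_all
    then have "pair_form (\<beta> j + of_bool P) (\<beta> (1 + j) + of_bool Q)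
        = pair_form ((\<alpha> + of_bool Q) + (b1 + of_bool (P \<noteq> Q))) (\<alpha> + of_bool Q)"
      unfolding shift[symmetric] by (simp add: ac_simps char2)
    then show ?thesis using \<open>j = 2\<close> pair_form_rotate(2)[OF char2] by (simp add: \<theta>_def rotation_def)
  qed (simp add: \<theta>_def rotation_def)
qed

lemma galois_group_\<theta>:
  assumes g: "g \<in> carrier G" and j: "j < 3"
    and "g \<alpha> = \<beta> j + of_bool e0" "g b1 = \<beta> (1 + j) + of_bool e1"
  shows "g (\<theta> p) = \<theta> (affine j e0 e1 p)"
proof -
  interpret g: subfield_hom N g using G_subfield_hom[OF g] .
  have N: "\<alpha> \<in> N" "b1 \<in> N" "of_bool e \<in> N" for e using generators_in_N of_bool_in_N by auto
  have "g (of_bool e) = of_bool e" for e by (cases e) simp_all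
  then have "g (\<theta> p) = pair_form (g \<alpha> + of_bool (fst p)) (g b1 + of_bool (snd p))"
    unfolding \<theta>_def pair_form_def using N N_subfield
    by (simp add: g.add g.mult g.power subfield_add subfield_mult subfield_power)
  also have "\<dots> = pair_form (\<beta> j + of_bool (fst p \<noteq> e0)) (\<beta> (1 + j) + of_bool (snd p \<noteq> e1))"
    using assms(3,4) char2 by (cases e0; cases e1; cases "fst p"; cases "snd p") (simp_all add: ac_simps)
  also have "\<dots> = \<theta> (affine j e0 e1 p)"
    unfolding pair_form_\<beta>[OF j] affine_def translation_def by simp
  finally show ?thesis .
qed

definition "affine_part g = (\<lambda>p. THE q. g (\<theta> p) = \<theta> q)"

lemma affine_part_params:
  assumes "g \<in> carrier G"
  shows "\<exists>j e0 e1. j < 3 \<and> g T = \<omega>^j * T \<and> g \<alpha> = \<beta> j + of_bool e0 \<and> g b1 = \<beta> (1 + j) + of_bool e1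
    \<and> affine_part g = affine j e0 e1"
proof -
  obtain j e0 e1 where j: "j < 3" "g T = \<omega>^j * T" "g \<alpha> = \<beta> j + of_bool e0" "g b1 = \<beta> (1 + j) + of_bool e1"
    using galois_group_params[OF assms] by blast
  then have "affine_part g = affine j e0 e1"
    unfolding affine_part_def using galois_group_\<theta>[OF assms] \<theta>_inj by (intro ext the_equality) auto
  then show ?thesis using j by blast
qed

lemma galois_group_\<theta>_affine_part: "g \<in> carrier G \<Longrightarrow> g (\<theta> p) = \<theta> (affine_part g p)"
  using affine_part_params galois_group_\<theta> by metis

lemma affine_part_comp:
  assumes g: "g \<in> carrier G" and h: "h \<in> carrier G"
  shows "affine_part (g \<circ> h) = affine_part g \<circ> affine_part h"
proof
  fix p
  have "g \<circ> h \<in> carrier G"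
    using galois_group_comp_closed[OF N_subfield] g h unfolding G_def by blast
  then have "\<theta> (affine_part (g \<circ> h) p) = \<theta> (affine_part g (affine_part h p))"
    using galois_group_\<theta>_affine_part g h by (metis comp_apply)
  then show "affine_part (g \<circ> h) p = (affine_part g \<circ> affine_part h) p" using \<theta>_inj by simp
qed

definition "to_A4 g = perm_of (affine_part g)"

lemma to_A4_hom: "to_A4 \<in> hom G (alt_group 4)"
proof (rule homI)
  show "to_A4 g \<in> carrier (alt_group 4)" if "g \<in> carrier G" for g
    using affine_part_params[OF that] perm_of_affine_alt unfolding to_A4_def by metis
  show "to_A4 (g \<otimes>\<^bsub>G\<^esub> h) = to_A4 g \<otimes>\<^bsub>alt_group 4\<^esub> to_A4 h"
    if "g \<in> carrier G" "h \<in> carrier G" for g h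
    unfolding G_def galois_group_mult alt_group_mult to_A4_def
    using affine_part_comp[OF that] by (simp add: perm_of_comp)
qed

lemma to_A4_inj: "inj_on to_A4 (carrier G)"
proof (rule inj_onI)
  fix g h assume g: "g \<in> carrier G" and h: "h \<in> carrier G" and "to_A4 g = to_A4 h"
  obtain j e0 e1 where pg: "j < 3" "g T = \<omega>^j * T" "g \<alpha> = \<beta> j + of_bool e0"
      "g b1 = \<beta> (1 + j) + of_bool e1" "affine_part g = affine j e0 e1"
    using affine_part_params[OF g] by blast
  obtain j' e0' e1' where ph: "j' < 3" "h T = \<omega>^j' * T" "h \<alpha> = \<beta> j' + of_bool e0'"
      "h b1 = \<beta> (1 + j') + of_bool e1'" "affine_part h = affine j' e0' e1'"
    using affine_part_params[OF h] by blast
  have "affine j e0 e1 = affine j' e0' e1'"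
    using \<open>to_A4 g = to_A4 h\<close> perm_of_inj unfolding to_A4_def pg(5) ph(5) by blast
  then have "j = j'" "e0 = e0'" "e1 = e1'" using affine_inj[OF pg(1) ph(1)] by auto
  then have "g T = h T" "g \<alpha> = h \<alpha>" "g b1 = h b1" using pg ph by simp_all
  moreover have "g b2 = h b2"
    using \<open>g \<alpha> = h \<alpha>\<close> \<open>g b1 = h b1\<close> G_subfield_hom[OF g] G_subfield_hom[OF h] generators_in_N
    unfolding b2_eq by (simp add: subfield_hom.add)
  ultimately show "g = h" using G_eqI[OF g h] by blast
qed

lemma card_A4: "card (carrier (alt_group 4)) = 12"
  using alt_group_card_carrier[of 4] by (simp add: fact_numeral)

lemma A4_finite: "finite (carrier (alt_group 4))"
  using card_A4 by (intro card_ge_0_finite) simp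

lemma to_A4_image: "to_A4 ` carrier G \<subseteq> carrier (alt_group 4)"
  using to_A4_hom unfolding hom_def by blast

lemma G_finite: "finite (carrier G)"
  by (rule inj_on_finite[OF to_A4_inj to_A4_image A4_finite])

lemma card_G_ge_12: "12 \<le> card (carrier G)"
proof -
  let ?D = "{..<3::nat} \<times> (UNIV :: bool set) \<times> (UNIV :: bool set)"
  let ?P = "\<lambda>(j, e0, e1) g. g T = \<omega>^j * T \<and> g \<alpha> = \<beta> j + of_bool e0 \<and> g b1 = \<beta> (1 + j) + of_bool e1"
  have "card ?D \<le> card (carrier G)"
  proof (rule card_le_card_of_witnesses[OF G_finite])
    fix d assume "d \<in> ?D"
    then show "\<exists>g\<in>carrier G. ?P d g" using galois_group_elem_exists by auto
  next
    fix d d' g assume "d \<in> ?D" "d' \<in> ?D" "?P d g" "?P d' g"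
    then obtain j e0 e1 j' e0' e1' where d: "d = (j, e0, e1)" "d' = (j', e0', e1')"
      and "j < 3" "j' < 3" by auto
    with \<open>?P d g\<close> \<open>?P d' g\<close> have "j = j'" using omega_power_T_inj by auto
    with \<open>?P d g\<close> \<open>?P d' g\<close> show "d = d'" unfolding d by (auto dest: add_of_bool_inj)
  qed
  then show ?thesis by (simp add: card_cartesian_product del: UNIV_Times_UNIV)
qed

theorem G_iso_A4: "G \<cong> alt_group 4"
proof -
  have "card (to_A4 ` carrier G) = card (carrier (alt_group 4))"
    using card_image[OF to_A4_inj] card_mono[OF A4_finite to_A4_image] card_G_ge_12 card_A4 by simp
  then have "bij_betw to_A4 (carrier G) (carrier (alt_group 4))"
    using card_subset_eq[OF A4_finite to_A4_image] to_A4_inj by (simp add: bij_betw_def)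
  then show ?thesis using to_A4_hom unfolding is_iso_def iso_def by blast
qed

end

context as_tower
begin

lemma artin_schreier_root_exists: "\<exists>x::'b. x^2 - x = c"
proof -
  have "degree [:- c, -1, 1::'b:] > 0" by simp
  then obtain x where "poly [:- c, -1, 1::'b:] x = 0"
    using \<Omega>_alg_closed unfolding alg_closed_type_def by blast
  then have "x^2 - x = c" by (simp add: algebra_simps power2_eq_square)
  then show ?thesis by blast
qed

lemma galois_group_iso_A4:
  assumes "\<forall>n. 3 dvd n \<longrightarrow> a $$ n = 0"
  shows "galois_group K (galois_closure K M) \<cong> alt_group 4"
proof -
  obtain n where "a $$ n \<noteq> 0" using a_nz by (auto simp: fls_eq_iff)
  with assms have n: "a $$ n \<noteq> 0" "\<not> 3 dvd n" by auto
  obtain b1 where b1: "b1^2 - b1 = a_conj 1" using artin_schreier_root_exists by blast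
  have "(\<alpha> + b1)^2 - (\<alpha> + b1) = (\<alpha>^2 - \<alpha>) + (b1^2 - b1)"
    using char2 by (simp add: power2_sum algebra_simps)
  then have "(\<alpha> + b1)^2 - (\<alpha> + b1) = a_conj 2"
    using \<alpha>_root b1 a_conj_0 a_conj_sum_eq[OF assms] by simp
  then interpret as_closure_A4 a \<iota> \<alpha> b1 "\<alpha> + b1" n
    using b1 n by unfold_locales auto
  show ?thesis using G_iso_A4 unfolding G_def galois_closure_eq_N .
qed

lemma card_galois_group_ne_12:
  assumes "a $$ m \<noteq> 0" "3 dvd m"
  shows "card (carrier (galois_group K (galois_closure K M))) \<noteq> 12"
proof (cases "\<exists>n. a $$ n \<noteq> 0 \<and> \<not> 3 dvd n")
  case True
  then obtain n where n: "a $$ n \<noteq> 0" "\<not> 3 dvd n" by blast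
  obtain b1 b2 where "b1^2 - b1 = a_conj 1" "b2^2 - b2 = a_conj 2"
    using artin_schreier_root_exists by metis
  then interpret as_closure a \<iota> \<alpha> b1 b2 by unfold_locales
  show ?thesis
    using card_G_ge_24[OF n assms] unfolding G_def galois_closure_eq_N by fastforce
next
  case False
  then have "a_conj j = \<alpha>^2 - \<alpha>" for j
    using a_conj_eq_if_supported_on_3 a_conj_0 \<alpha>_root by auto
  then interpret as_closure a \<iota> \<alpha> \<alpha> \<alpha> by unfold_locales simp_all
  show ?thesis using card_G_le_6 unfolding G_def galois_closure_eq_N by simp
qed

end

theorem mainTheorem5:
  fixes a :: "'k::field fls"
    and \<iota> :: "'k fls \<Rightarrow> 'b::field"
    and \<alpha> :: 'b
  assumes k_alg_closed: "alg_closed_type TYPE('k)"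
    and k_char: "CHAR('k) = 2"
    and \<Omega>_alg_closed: "alg_closed_type TYPE('b)"
    and \<iota>_hom: "hom_on UNIV \<iota>"
    and a_nz: "a \<noteq> 0"
    and a_std: "standard_form a"
    and \<alpha>_root: "\<alpha>\<^sup>2 - \<alpha> = \<iota> a"
  shows "galois_group (\<iota> ` range (\<lambda>f. fls_compose_power f 3))
            (galois_closure (\<iota> ` range (\<lambda>f. fls_compose_power f 3)) (gen_field (insert \<alpha> (range \<iota>))))
           \<cong> alt_group 4
         \<longleftrightarrow> (\<forall>n. 3 dvd n \<longrightarrow> fls_nth a n = 0)"
proof -
  interpret as_tower a \<iota> \<alpha> using assms by unfold_locales
  have "galois_group K (galois_closure K M) \<cong> alt_group 4 \<longleftrightarrow> (\<forall>n. 3 dvd n \<longrightarrow> a $$ n = 0)"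
  proof
    assume iso: "galois_group K (galois_closure K M) \<cong> alt_group 4"
    show "\<forall>n. 3 dvd n \<longrightarrow> a $$ n = 0"
      using iso_same_card[OF iso] alt_group_card_carrier[of 4] card_galois_group_ne_12
      by (auto simp: fact_numeral)
  qed (rule galois_group_iso_A4)
  then show ?thesis unfolding K_def M_def L_def .
qed

end
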